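(* Let $\Omega\subset\mathbb{R}^n$ ($n=2$ or $3$) be a bounded, open, connected domain with Lipschitz boundary and outward unit normal $\bm{n}$. Let $\kappa:\Omega\to\mathbb{R}$ and $\lambda=1/\kappa$, with $\lambda\in C^1(\Omega)$ and constants $0<\kappa_{\min}\le\kappa_{\max}$, $0<\lambda_{\min}\le\lambda_{\max}$ such that $\kappa_{\min}\le\kappa\le\kappa_{\max}$ and $\lambda_{\min}\le\lambda\le\lambda_{\max}$ on $\Omega$. Let $f\in L^2(\Omega)$ with $\int_\Omega f\,d\Omega=0$. Let $$\mathcal{U}=\{\bm{v}\in[L^2(\Omega)]^n:\ \operatorname{div}\bm{v}\in L^2(\Omega),\ \operatorname{curl}(\lambda\bm{v})\in[L^2(\Omega)]^{2n-3},\ \bm{v}\cdot\bm{n}=0\text{ on }\partial\Omega\},\qquad \mathcal{P}=\{q\in H^1(\Omega):\ (q,1)=0\},$$ with norm $\|\{\bm{u},p\}\|_{\mathcal{U}\times\mathcal{P}}^2=\|\bm{u}\|^2+\|\operatorname{div}\bm{u}\|^2+\|\operatorname{curl}(\lambda\bm{u})\|^2+\|\nabla p\|^2$, $$B_{\mathrm{CGLS}}(\{\bm{u},p\};\{\bm{v},q\})=(\lambda\bm{u},\bm{v})-(\operatorname{div}\bm{v},p)-(\operatorname{div}\bm{u},q)-\tfrac12\big(\kappa(\lambda\bm{u}+\nabla p),\lambda\bm{v}+\nabla q\big)+\tfrac12(\lambda\operatorname{div}\bm{u},\operatorname{div}\bm{v})+\tfrac12\big(\kappa\operatorname{curl}(\lambda\bm{u}),\operatorname{curl}(\lambda\bm{v})\big),$$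 $$F_{\mathrm{CGLS}}(\{\bm{v},q\})=-(f,q)+\tfrac12(\lambda f,\operatorname{div}\bm{v}).$$ Let $M>0$ be a constant with $|B_{\mathrm{CGLS}}(\{\bm{u},p\},\{\bm{v},q\})|\le M\|\{\bm{u},p\}\|_{\mathcal{U}\times\mathcal{P}}\|\{\bm{v},q\}\|_{\mathcal{U}\times\mathcal{P}}$ for all arguments in $\mathcal{U}\times\mathcal{P}$, and let $\alpha=\tfrac12\min\{\lambda_{\min},\kappa_{\min}\}$. Let $\{\mathcal{T}_h\}$ be a family of partitions of $\Omega$ into elements $\Omega^e$ of maximal diameter $h$, $\mathcal{S}_h^m=\{\varphi_h\in C^0(\Omega):\ \varphi_h|_{\Omega^e}\in\mathbb{P}_m(\Omega^e)\ \forall\Omega^e\}$, $\mathcal{U}_h^l=[\mathcal{S}_h^l]^n\cap\mathcal{U}$, $\mathcal{P}_h^k=\mathcal{S}_h^k\cap\mathcal{P}$ for integers $l,k\ge1$. Let $\{\bm{u},p\}\in\mathcal{U}\times\mathcal{P}$ satisfy $B_{\mathrm{CGLS}}(\{\bm{u},p\};\{\bm{v},q\})=F_{\mathrm{CGLS}}(\{\bm{v},q\})$ for all $\{\bm{v},q\}\in\mathcal{U}\times\mathcal{P}$, and $\{\bm{u}_h,p_h\}\in\mathcal{U}_h^l\times\mathcal{P}_h^k$ satisfy $B_{\mathrm{CGLS}}(\{\bm{u}_h,p_h\};\{\bm{v}_h,q_h\})=F_{\mathrm{CGLS}}(\{\bm{v}_h,q_h\})$ for all $\{\bm{v}_h,q_h\}\in\mathcal{U}_h^l\times\mathcal{P}_h^k$.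 Then $$\|\{\bm{u}-\bm{u}_h,p-p_h\}\|_{\mathcal{U}\times\mathcal{P}}\le\frac{M}{\alpha}\,\|\{\bm{u}-\bm{v}_h,p-q_h\}\|_{\mathcal{U}\times\mathcal{P}}\quad\text{for all }\{\bm{v}_h,q_h\}\in\mathcal{U}_h^l\times\mathcal{P}_h^k.$$
   Context: $(\cdot,\cdot)$ and $\|\cdot\|$ denote the $L^2(\Omega)$ inner product and norm. $\mathbb{P}_m(\Omega^e)$ is the set of polynomials of degree at most $m$ on $\Omega^e$. For $n=3$, $\operatorname{curl}$ is the usual curl; for $n=2$, $\operatorname{curl}\bm{w}=\partial w_2/\partial x_1-\partial w_1/\partial x_2$ (scalar). *)

theory Defs
  imports "HOL-Analysis.Analysis"
begin

definition L2 :: "'a::euclidean_space set \<Rightarrow> ('a \<Rightarrow> real) \<Rightarrow> bool" where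
  "L2 \<Omega> f \<longleftrightarrow> f \<in> borel_measurable (lebesgue_on \<Omega>) \<and>
     integrable (lebesgue_on \<Omega>) (\<lambda>x. (f x)\<^sup>2)"

definition L2v :: "'a::euclidean_space set \<Rightarrow> ('a \<Rightarrow> 'a) \<Rightarrow> bool" where
  "L2v \<Omega> v \<longleftrightarrow> (\<forall>i\<in>Basis. L2 \<Omega> (\<lambda>x. v x \<bullet> i))"

definition ip :: "'a::euclidean_space set \<Rightarrow> ('a \<Rightarrow> real) \<Rightarrow> ('a \<Rightarrow> real) \<Rightarrow> real" where
  "ip \<Omega> f g = integral\<^sup>L (lebesgue_on \<Omega>) (\<lambda>x. f x * g x)"

definition ipv :: "'a::euclidean_space set \<Rightarrow> ('a \<Rightarrow> 'a) \<Rightarrow> ('a \<Rightarrow> 'a) \<Rightarrow> real" where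
  "ipv \<Omega> v w = integral\<^sup>L (lebesgue_on \<Omega>) (\<lambda>x. v x \<bullet> w x)"

definition pd :: "('a::euclidean_space \<Rightarrow> real) \<Rightarrow> 'a \<Rightarrow> 'a \<Rightarrow> real" where
  "pd \<phi> x i = frechet_derivative \<phi> (at x) i"

definition cgrad :: "('a::euclidean_space \<Rightarrow> real) \<Rightarrow> 'a \<Rightarrow> 'a" where
  "cgrad \<phi> x = (\<Sum>i\<in>Basis. pd \<phi> x i *\<^sub>R i)"

definition test_fun :: "'a::euclidean_space set \<Rightarrow> ('a \<Rightarrow> real) \<Rightarrow> bool" where
  "test_fun \<Omega> \<phi> \<longleftrightarrow> (\<forall>x. \<phi> differentiable at x) \<and>
     (\<forall>i\<in>Basis. continuous_on UNIV (\<lambda>x. pd \<phi> x i)) \<and>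
     (\<exists>K. compact K \<and> K \<subseteq> \<Omega> \<and> (\<forall>x. x \<notin> K \<longrightarrow> \<phi> x = 0))"

definition is_weak_grad :: "'a::euclidean_space set \<Rightarrow> ('a \<Rightarrow> real) \<Rightarrow> ('a \<Rightarrow> 'a) \<Rightarrow> bool" where
  "is_weak_grad \<Omega> p G \<longleftrightarrow> L2v \<Omega> G \<and>
     (\<forall>\<phi>. test_fun \<Omega> \<phi> \<longrightarrow> (\<forall>i\<in>Basis.
        integral\<^sup>L (lebesgue_on \<Omega>) (\<lambda>x. p x * pd \<phi> x i)
          = - integral\<^sup>L (lebesgue_on \<Omega>) (\<lambda>x. (G x \<bullet> i) * \<phi> x)))"

definition is_weak_div :: "'a::euclidean_space set \<Rightarrow> ('a \<Rightarrow> 'a) \<Rightarrow> ('a \<Rightarrow> real) \<Rightarrow> bool" where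
  "is_weak_div \<Omega> v g \<longleftrightarrow> L2 \<Omega> g \<and>
     (\<forall>\<phi>. test_fun \<Omega> \<phi> \<longrightarrow> ipv \<Omega> v (cgrad \<phi>) = - ip \<Omega> g \<phi>)"

text \<open>Weak curl, represented by its skew components C x i j = d_i w_j - d_j w_i
  (i, j basis vectors).  For n = 2 the only independent component is the scalar curl,
  for n = 3 the three independent components are (up to sign) the components of the
  usual curl.\<close>
definition is_weak_curl :: "'a::euclidean_space set \<Rightarrow> ('a \<Rightarrow> 'a) \<Rightarrow> ('a \<Rightarrow> 'a \<Rightarrow> 'a \<Rightarrow> real) \<Rightarrow> bool" where
  "is_weak_curl \<Omega> w C \<longleftrightarrow> (\<forall>i\<in>Basis. \<forall>j\<in>Basis. L2 \<Omega> (\<lambda>x. C x i j)) \<and>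
     (\<forall>\<phi>. test_fun \<Omega> \<phi> \<longrightarrow> (\<forall>i\<in>Basis. \<forall>j\<in>Basis.
        integral\<^sup>L (lebesgue_on \<Omega>) (\<lambda>x. (w x \<bullet> j) * pd \<phi> x i - (w x \<bullet> i) * pd \<phi> x j)
          = - integral\<^sup>L (lebesgue_on \<Omega>) (\<lambda>x. C x i j * \<phi> x)))"

definition wgrad :: "'a::euclidean_space set \<Rightarrow> ('a \<Rightarrow> real) \<Rightarrow> 'a \<Rightarrow> 'a" where
  "wgrad \<Omega> p = (SOME G. is_weak_grad \<Omega> p G)"

definition wdiv :: "'a::euclidean_space set \<Rightarrow> ('a \<Rightarrow> 'a) \<Rightarrow> 'a \<Rightarrow> real" where
  "wdiv \<Omega> v = (SOME g. is_weak_div \<Omega> v g)"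

definition wcurl :: "'a::euclidean_space set \<Rightarrow> ('a \<Rightarrow> 'a) \<Rightarrow> 'a \<Rightarrow> 'a \<Rightarrow> 'a \<Rightarrow> real" where
  "wcurl \<Omega> w = (SOME C. is_weak_curl \<Omega> w C)"

text \<open>Weighted L2 inner product of curls: (kap curl a, curl b) = integral of
  kap * sum over unordered pairs {i,j} of C_ij D_ij = (1/2) * sum over ordered pairs.\<close>
definition curl_ip :: "'a::euclidean_space set \<Rightarrow> ('a \<Rightarrow> real) \<Rightarrow> ('a \<Rightarrow> 'a \<Rightarrow> 'a \<Rightarrow> real)
     \<Rightarrow> ('a \<Rightarrow> 'a \<Rightarrow> 'a \<Rightarrow> real) \<Rightarrow> real" where
  "curl_ip \<Omega> kap C D = integral\<^sup>L (lebesgue_on \<Omega>)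
     (\<lambda>x. kap x * ((\<Sum>i\<in>Basis. \<Sum>j\<in>Basis. C x i j * D x i j) / 2))"

definition H1 :: "'a::euclidean_space set \<Rightarrow> ('a \<Rightarrow> real) \<Rightarrow> bool" where
  "H1 \<Omega> q \<longleftrightarrow> L2 \<Omega> q \<and> (\<exists>G. is_weak_grad \<Omega> q G)"

text \<open>v . n = 0 on the boundary, in the sense of the normal trace (Green's formula).\<close>
definition normal_trace_zero :: "'a::euclidean_space set \<Rightarrow> ('a \<Rightarrow> 'a) \<Rightarrow> bool" where
  "normal_trace_zero \<Omega> v \<longleftrightarrow>
     (\<forall>\<phi>. H1 \<Omega> \<phi> \<longrightarrow> ipv \<Omega> v (wgrad \<Omega> \<phi>) + ip \<Omega> (wdiv \<Omega> v) \<phi> = 0)"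

definition Uspace :: "'a::euclidean_space set \<Rightarrow> ('a \<Rightarrow> real) \<Rightarrow> ('a \<Rightarrow> 'a) \<Rightarrow> bool" where
  "Uspace \<Omega> lam v \<longleftrightarrow> L2v \<Omega> v \<and> (\<exists>g. is_weak_div \<Omega> v g) \<and>
     (\<exists>C. is_weak_curl \<Omega> (\<lambda>x. lam x *\<^sub>R v x) C) \<and> normal_trace_zero \<Omega> v"

definition Pspace :: "'a::euclidean_space set \<Rightarrow> ('a \<Rightarrow> real) \<Rightarrow> bool" where
  "Pspace \<Omega> q \<longleftrightarrow> H1 \<Omega> q \<and> ip \<Omega> q (\<lambda>_. 1) = 0"

definition normUP :: "'a::euclidean_space set \<Rightarrow> ('a \<Rightarrow> real) \<Rightarrow> ('a \<Rightarrow> 'a) \<Rightarrow> ('a \<Rightarrow> real) \<Rightarrow> real" where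
  "normUP \<Omega> lam u p = sqrt (ipv \<Omega> u u + ip \<Omega> (wdiv \<Omega> u) (wdiv \<Omega> u)
     + curl_ip \<Omega> (\<lambda>_. 1) (wcurl \<Omega> (\<lambda>x. lam x *\<^sub>R u x)) (wcurl \<Omega> (\<lambda>x. lam x *\<^sub>R u x))
     + ipv \<Omega> (wgrad \<Omega> p) (wgrad \<Omega> p))"

definition B_CGLS :: "'a::euclidean_space set \<Rightarrow> ('a \<Rightarrow> real) \<Rightarrow> ('a \<Rightarrow> real)
    \<Rightarrow> ('a \<Rightarrow> 'a) \<Rightarrow> ('a \<Rightarrow> real) \<Rightarrow> ('a \<Rightarrow> 'a) \<Rightarrow> ('a \<Rightarrow> real) \<Rightarrow> real" where
  "B_CGLS \<Omega> lam kap u p v q =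
      ipv \<Omega> (\<lambda>x. lam x *\<^sub>R u x) v - ip \<Omega> (wdiv \<Omega> v) p - ip \<Omega> (wdiv \<Omega> u) q
    - 1/2 * ipv \<Omega> (\<lambda>x. kap x *\<^sub>R (lam x *\<^sub>R u x + wgrad \<Omega> p x)) (\<lambda>x. lam x *\<^sub>R v x + wgrad \<Omega> q x)
    + 1/2 * ip \<Omega> (\<lambda>x. lam x * wdiv \<Omega> u x) (wdiv \<Omega> v)
    + 1/2 * curl_ip \<Omega> kap (wcurl \<Omega> (\<lambda>x. lam x *\<^sub>R u x)) (wcurl \<Omega> (\<lambda>x. lam x *\<^sub>R v x))"

definition F_CGLS :: "'a::euclidean_space set \<Rightarrow> ('a \<Rightarrow> real) \<Rightarrow> ('a \<Rightarrow> real)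
    \<Rightarrow> ('a \<Rightarrow> 'a) \<Rightarrow> ('a \<Rightarrow> real) \<Rightarrow> real" where
  "F_CGLS \<Omega> lam f v q = - ip \<Omega> f q + 1/2 * ip \<Omega> (\<lambda>x. lam x * f x) (wdiv \<Omega> v)"

definition lipschitz_boundary :: "'a::euclidean_space set \<Rightarrow> bool" where
  "lipschitz_boundary \<Omega> \<longleftrightarrow> (\<forall>x0\<in>frontier \<Omega>. \<exists>U R e g L. open U \<and> x0 \<in> U \<and>
     orthogonal_transformation R \<and> e \<in> Basis \<and> L-lipschitz_on UNIV (g :: 'a \<Rightarrow> real) \<and>
     \<Omega> \<inter> U = {y\<in>U. R y \<bullet> e < g (R y - (R y \<bullet> e) *\<^sub>R e)})"

definition C1_on :: "'a::euclidean_space set \<Rightarrow> ('a \<Rightarrow> real) \<Rightarrow> bool" where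
  "C1_on \<Omega> f \<longleftrightarrow> (\<forall>x\<in>\<Omega>. f differentiable at x) \<and>
     (\<forall>i\<in>Basis. continuous_on \<Omega> (\<lambda>x. pd f x i))"

definition is_partition :: "'a::euclidean_space set \<Rightarrow> 'a set set \<Rightarrow> real \<Rightarrow> bool" where
  "is_partition \<Omega> T h \<longleftrightarrow> finite T \<and>
     (\<forall>e\<in>T. compact e \<and> interior e \<noteq> {} \<and> closure (interior e) = e \<and> diameter e \<le> h) \<and>
     (\<exists>e\<in>T. diameter e = h) \<and>
     \<Union>T = closure \<Omega> \<and> pairwise (\<lambda>e e'. interior e \<inter> interior e' = {}) T"

definition multi_idx :: "nat \<Rightarrow> ('a::euclidean_space \<Rightarrow> nat) set" where
  "multi_idx m = {\<alpha>. (\<forall>i. i \<notin> Basis \<longrightarrow> \<alpha> i = 0) \<and> (\<Sum>i\<in>Basis. \<alpha> i) \<le> m}"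

definition poly_le :: "nat \<Rightarrow> ('a::euclidean_space \<Rightarrow> real) \<Rightarrow> bool" where
  "poly_le m P \<longleftrightarrow> (\<exists>c. \<forall>x. P x = (\<Sum>\<alpha>\<in>multi_idx m. c \<alpha> * (\<Prod>i\<in>Basis. (x \<bullet> i) ^ \<alpha> i)))"

definition Sh :: "'a::euclidean_space set \<Rightarrow> 'a set set \<Rightarrow> nat \<Rightarrow> ('a \<Rightarrow> real) \<Rightarrow> bool" where
  "Sh \<Omega> T m \<phi> \<longleftrightarrow> continuous_on \<Omega> \<phi> \<and>
     (\<forall>e\<in>T. \<exists>P. poly_le m P \<and> (\<forall>x\<in>e \<inter> \<Omega>. \<phi> x = P x))"

definition Uh :: "'a::euclidean_space set \<Rightarrow> ('a \<Rightarrow> real) \<Rightarrow> 'a set set \<Rightarrow> nat \<Rightarrow> ('a \<Rightarrow> 'a) \<Rightarrow> bool" where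
  "Uh \<Omega> lam T l v \<longleftrightarrow> (\<forall>i\<in>Basis. Sh \<Omega> T l (\<lambda>x. v x \<bullet> i)) \<and> Uspace \<Omega> lam v"

definition Ph :: "'a::euclidean_space set \<Rightarrow> 'a set set \<Rightarrow> nat \<Rightarrow> ('a \<Rightarrow> real) \<Rightarrow> bool" where
  "Ph \<Omega> T k q \<longleftrightarrow> Sh \<Omega> T k q \<and> Pspace \<Omega> q"

end

theory Submission
  imports Defs
begin

text \<open>
  Testing the error \<open>e = {u - u\<^sub>h, p - p\<^sub>h}\<close>
  with \<open>{u - u\<^sub>h, p\<^sub>h - p}\<close> makes the pressure coupling terms cancel, and since \<open>\<lambda>\<kappa> = 1\<close>
  the remaining terms are at least \<open>\<alpha>\<parallel>e\<parallel>\<^sup>2\<close>.  Writing that test pair as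
  \<open>{u - v\<^sub>h, q\<^sub>h - p} + {v\<^sub>h - u\<^sub>h, p\<^sub>h - q\<^sub>h}\<close>, Galerkin orthogonality kills the discrete summand
  and continuity bounds the other one by \<open>M\<parallel>e\<parallel>\<parallel>{u - v\<^sub>h, p - q\<^sub>h}\<parallel>\<close>, as the norm does not
  see the sign of the pressure.

  Most of the work goes into the bilinearity of \<^const>\<open>B_CGLS\<close>: the weak divergence, curl and gradient
  are chosen by Hilbert's choice operator, so they are linear only almost everywhere.  This follows
  from the uniqueness of weak derivatives, that is, from the fundamental lemma of the calculus of
  variations, proved with \<open>C\<^sup>1\<close> bump functions converging to indicators of boxes and a
  Dynkin argument extending the vanishing of the integrals from boxes to all measurable sets.
\<close>

section \<open>\<open>C\<^sup>1\<close> bump functions on boxes\<close>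

definition pos_sq :: "real \<Rightarrow> real" where
  "pos_sq u = (max 0 u)\<^sup>2"

lemma has_real_derivative_pos_sq: "(pos_sq has_real_derivative 2 * max 0 u) (at u)"
proof -
  consider "u > 0" | "u < 0" | "u = 0" by linarith
  then show ?thesis
  proof cases
    case 1
    have "\<forall>\<^sub>F v in nhds u. v\<^sup>2 = pos_sq v"
      using eventually_nhds_in_open[of "{0<..}" u] 1
      by (auto elim!: eventually_mono simp: pos_sq_def)
    moreover have "((\<lambda>v. v\<^sup>2) has_real_derivative 2 * u) (at u)"
      by (auto intro!: derivative_eq_intros)
    ultimately show ?thesis
      using 1 DERIV_cong_ev[of u u "\<lambda>v. v\<^sup>2" pos_sq] by simp
  next
    case 2
    have "\<forall>\<^sub>F v in nhds u. 0 = pos_sq v"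
      using eventually_nhds_in_open[of "{..<0}" u] 2
      by (auto elim!: eventually_mono simp: pos_sq_def)
    then show ?thesis
      using 2 DERIV_cong_ev[of u u "\<lambda>v. 0" pos_sq 0] by simp
  next
    case 3
    have "norm ((pos_sq (0 + h) - pos_sq 0) / h) \<le> norm h" for h :: real
      by (cases "h > 0") (simp_all add: pos_sq_def power2_eq_square)
    then have "((\<lambda>h. (pos_sq (0 + h) - pos_sq 0) / h) \<longlongrightarrow> 0) (at 0)"
      by (intro Lim_null_comparison[OF always_eventually tendsto_norm_zero[OF tendsto_ident_at]])
        auto
    then show ?thesis using 3 by (simp add: DERIV_def)
  qed
qed

lemma has_real_derivative_pos_sq_comp [derivative_intros]:
  "(f has_real_derivative f') (at x within s) \<Longrightarrow>
   ((\<lambda>x. pos_sq (f x)) has_real_derivative 2 * max 0 (f x) * f') (at x within s)"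
  using DERIV_chain2[OF has_real_derivative_pos_sq] by blast

lemma continuous_on_pos_sq_comp [continuous_intros]:
  "continuous_on S f \<Longrightarrow> continuous_on S (\<lambda>x. pos_sq (f x))"
  unfolding pos_sq_def by (intro continuous_intros)

definition ramp :: "nat \<Rightarrow> real \<Rightarrow> real \<Rightarrow> real \<Rightarrow> real" where
  "ramp n c d t = 1 - exp (- real n * pos_sq ((t - c) * (d - t)))"

definition ramp' :: "nat \<Rightarrow> real \<Rightarrow> real \<Rightarrow> real \<Rightarrow> real" where
  "ramp' n c d t = real n * (2 * max 0 ((t - c) * (d - t)) * (c + d - 2 * t))
     * exp (- real n * pos_sq ((t - c) * (d - t)))"

lemma has_real_derivative_ramp: "(ramp n c d has_real_derivative ramp' n c d t) (at t)"
  unfolding ramp_def[abs_def] ramp'_def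
  by (auto intro!: derivative_eq_intros simp: algebra_simps)

lemma continuous_on_ramp: "continuous_on UNIV (ramp n c d)"
  unfolding ramp_def[abs_def] by (intro continuous_intros)

lemma continuous_on_ramp': "continuous_on UNIV (ramp' n c d)"
  unfolding ramp'_def[abs_def] by (intro continuous_intros)

lemma ramp_bounds: "0 \<le> ramp n c d t" "ramp n c d t \<le> 1"
  by (simp_all add: ramp_def pos_sq_def)

lemma ramp_eq_0:
  assumes "c < d" "t \<notin> {c<..<d}"
  shows "ramp n c d t = 0"
proof -
  have "(t - c) * (d - t) \<le> 0"
    using assms by (cases "t \<le> c") (auto intro: mult_nonpos_nonneg mult_nonneg_nonpos)
  then show ?thesis by (simp add: ramp_def pos_sq_def)
qed

lemma ramp_tendsto_1:
  assumes "t \<in> {c<..<d}"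
  shows "(\<lambda>n. ramp n c d t) \<longlonglongrightarrow> 1"
proof -
  define a where "a = pos_sq ((t - c) * (d - t))"
  have "0 < a"
    using assms by (simp add: a_def pos_sq_def)
  then have "(\<lambda>n. exp (- a) ^ n) \<longlonglongrightarrow> 0"
    by (intro LIMSEQ_power_zero) simp
  then have "(\<lambda>n. 1 - exp (- a) ^ n) \<longlonglongrightarrow> 1 - 0"
    by (intro tendsto_diff tendsto_const)
  then show ?thesis
    by (simp add: ramp_def a_def exp_of_nat_mult[symmetric])
qed

definition box_bump :: "nat \<Rightarrow> 'a \<Rightarrow> 'a \<Rightarrow> 'a::euclidean_space \<Rightarrow> real" where
  "box_bump n c d x = (\<Prod>i\<in>Basis. ramp n (c \<bullet> i) (d \<bullet> i) (x \<bullet> i))"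

definition box_bump' :: "nat \<Rightarrow> 'a \<Rightarrow> 'a \<Rightarrow> 'a::euclidean_space \<Rightarrow> 'a \<Rightarrow> real" where
  "box_bump' n c d x h = (\<Sum>i\<in>Basis. (ramp' n (c \<bullet> i) (d \<bullet> i) (x \<bullet> i) * (h \<bullet> i)) *
     (\<Prod>j\<in>Basis - {i}. ramp n (c \<bullet> j) (d \<bullet> j) (x \<bullet> j)))"

lemma has_derivative_box_bump: "(box_bump n c d has_derivative box_bump' n c d x) (at x)"
  unfolding box_bump_def[abs_def] box_bump'_def[abs_def]
proof (rule has_derivative_prod)
  fix i :: 'a
  have "((\<lambda>x. x \<bullet> i) has_derivative (\<lambda>h. h \<bullet> i)) (at x)"
    by (auto intro!: derivative_eq_intros)
  moreover have "(ramp n (c \<bullet> i) (d \<bullet> i) has_derivative (\<lambda>h. ramp' n (c \<bullet> i) (d \<bullet> i) (x \<bullet> i) * h))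
      (at (x \<bullet> i))"
    using has_real_derivative_ramp by (simp add: has_field_derivative_def)
  ultimately show "((\<lambda>x. ramp n (c \<bullet> i) (d \<bullet> i) (x \<bullet> i)) has_derivative
      (\<lambda>h. ramp' n (c \<bullet> i) (d \<bullet> i) (x \<bullet> i) * (h \<bullet> i))) (at x)"
    by (rule has_derivative_compose[where g = "ramp n (c \<bullet> i) (d \<bullet> i)", simplified])
qed

lemma box_bump_eq_0:
  assumes "box c d \<noteq> {}" "x \<notin> box c d"
  shows "box_bump n c d x = 0"
proof -
  obtain i where i: "i \<in> Basis" "x \<bullet> i \<notin> {c \<bullet> i<..<d \<bullet> i}"
    using assms(2) by (auto simp: mem_box)
  moreover have "c \<bullet> i < d \<bullet> i"
    using assms(1) i(1) by (simp add: box_ne_empty)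
  ultimately have "ramp n (c \<bullet> i) (d \<bullet> i) (x \<bullet> i) = 0"
    by (rule_tac ramp_eq_0) auto
  then show ?thesis
    unfolding box_bump_def using i(1) by (intro prod_zero) auto
qed

lemma test_fun_box_bump:
  assumes "box c d \<noteq> {}" "cbox c d \<subseteq> \<Omega>"
  shows "test_fun \<Omega> (box_bump n c d)"
  unfolding test_fun_def
proof (intro conjI allI ballI exI[of _ "cbox c d"])
  show "box_bump n c d differentiable at x" for x
    using has_derivative_box_bump differentiable_def by blast
  have ramp_coord: "continuous_on UNIV (\<lambda>x. f n (c \<bullet> i) (d \<bullet> i) (x \<bullet> i))"
    if "\<And>n c d. continuous_on UNIV (f n c d)" for f :: "nat \<Rightarrow> real \<Rightarrow> real \<Rightarrow> real \<Rightarrow> real" and i :: 'a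
    by (intro continuous_on_compose2[OF that] continuous_intros) auto
  have pd_eq: "pd (box_bump n c d) x i = box_bump' n c d x i" for x i
    unfolding pd_def using frechet_derivative_at[OF has_derivative_box_bump] by metis
  show "continuous_on UNIV (\<lambda>x. pd (box_bump n c d) x i)" for i
    unfolding pd_eq box_bump'_def
    by (intro continuous_intros ramp_coord continuous_on_ramp continuous_on_ramp')
  show "x \<notin> cbox c d \<longrightarrow> box_bump n c d x = 0" for x
    using box_bump_eq_0[OF assms(1)] box_subset_cbox by blast
qed (use assms in auto)

lemma box_bump_bounds: "0 \<le> box_bump n c d x" "box_bump n c d x \<le> 1"
  unfolding box_bump_def by (simp_all add: prod_nonneg prod_le_1 ramp_bounds)

lemma box_bump_tendsto_indicator:
  assumes "box c d \<noteq> {}"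
  shows "(\<lambda>n. box_bump n c d x) \<longlonglongrightarrow> indicator (box c d) x"
proof (cases "x \<in> box c d")
  case True
  then have "(\<lambda>n. box_bump n c d x) \<longlonglongrightarrow> (\<Prod>i\<in>(Basis::'a set). 1)"
    unfolding box_bump_def[abs_def] by (intro tendsto_prod ramp_tendsto_1) (auto simp: mem_box)
  then show ?thesis using True by simp
next
  case False
  then show ?thesis using box_bump_eq_0[OF assms] by simp
qed

section \<open>The fundamental lemma of the calculus of variations\<close>

lemma borel_measurable_lebesgue_on_if_borel:
  "f \<in> borel_measurable borel \<Longrightarrow> f \<in> borel_measurable (lebesgue_on S)"
  by (intro measurable_restrict_space1 measurable_completion) simp

lemma continuous_on_test_fun: "test_fun \<Omega> \<phi> \<Longrightarrow> continuous_on UNIV \<phi>"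
  unfolding test_fun_def by (meson continuous_at_imp_continuous_on differentiable_imp_continuous_within)

lemma integral_indicator_box_eq_0:
  fixes g :: "'a::euclidean_space \<Rightarrow> real"
  assumes g: "integrable (lebesgue_on \<Omega>) g"
    and orth: "\<And>\<phi>. test_fun \<Omega> \<phi> \<Longrightarrow> integral\<^sup>L (lebesgue_on \<Omega>) (\<lambda>x. g x * \<phi> x) = 0"
    and sub: "cbox c d \<subseteq> \<Omega>"
  shows "integral\<^sup>L (lebesgue_on \<Omega>) (\<lambda>x. indicator (box c d) x * g x) = 0"
proof (cases "box c d = {}")
  case False
  have "(\<lambda>n. integral\<^sup>L (lebesgue_on \<Omega>) (\<lambda>x. g x * box_bump n c d x)) \<longlonglongrightarrow>
      integral\<^sup>L (lebesgue_on \<Omega>) (\<lambda>x. indicator (box c d) x * g x)"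
  proof (rule integral_dominated_convergence[where w = "\<lambda>x. norm (g x)"])
    have gm: "g \<in> borel_measurable (lebesgue_on \<Omega>)"
      using g by simp
    show "(\<lambda>x. g x * box_bump n c d x) \<in> borel_measurable (lebesgue_on \<Omega>)" for n
      using gm by (rule borel_measurable_times) (intro borel_measurable_lebesgue_on_if_borel
          borel_measurable_continuous_onI continuous_on_test_fun[OF test_fun_box_bump[OF False order.refl]])
    show "(\<lambda>x. indicator (box c d) x * g x) \<in> borel_measurable (lebesgue_on \<Omega>)"
      using gm by (rule borel_measurable_times[rotated]) (simp add: borel_measurable_lebesgue_on_if_borel)
    show "AE x in lebesgue_on \<Omega>. (\<lambda>n. g x * box_bump n c d x) \<longlonglongrightarrow> indicator (box c d) x * g x"
      using box_bump_tendsto_indicator[OF False] by (auto intro!: tendsto_mult_left simp: mult.commute)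
    show "AE x in lebesgue_on \<Omega>. norm (g x * box_bump n c d x) \<le> norm (g x)" for n
      using box_bump_bounds[of n c d] by (auto simp: abs_mult intro!: mult_left_le)
  qed (use g in simp)
  moreover have "integral\<^sup>L (lebesgue_on \<Omega>) (\<lambda>x. g x * box_bump n c d x) = 0" for n
    using orth test_fun_box_bump[OF False sub] by blast
  ultimately show ?thesis
    by (simp add: LIMSEQ_const_iff)
qed simp

lemma sigma_finite_measure_lebesgue: "sigma_finite_measure (lebesgue :: 'a::euclidean_space measure)"
proof -
  obtain A :: "'a set set" where A: "countable A" "A \<subseteq> sets lborel" "\<Union>A = space lborel"
      "\<forall>a\<in>A. emeasure lborel a \<noteq> \<infinity>"
    using lborel.sigma_finite_countable by blast
  show ?thesis
    by unfold_locales (use A in \<open>auto intro!: exI[of _ A]\<close>)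
qed

lemma sets_lebesgue_on_iff:
  assumes "open \<Omega>"
  shows "A \<in> sets (lebesgue_on \<Omega>) \<longleftrightarrow> A \<subseteq> \<Omega> \<and> A \<in> sets lebesgue"
  using assms by (intro sets_restrict_space_iff) auto

lemma integrable_indicator_borel_mult:
  fixes g :: "'a::euclidean_space \<Rightarrow> real"
  assumes "integrable (lebesgue_on \<Omega>) g" "B \<in> sets borel"
  shows "integrable (lebesgue_on \<Omega>) (\<lambda>x. indicator B x * g x)"
proof (rule Bochner_Integration.integrable_bound[OF integrable_norm[OF assms(1)]])
  show "(\<lambda>x. indicator B x * g x) \<in> borel_measurable (lebesgue_on \<Omega>)"
    using borel_measurable_lebesgue_on_if_borel[OF borel_measurable_indicator[OF assms(2)]]
      borel_measurable_integrable[OF assms(1)]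
    by (rule borel_measurable_times)
qed (intro AE_I2, simp split: split_indicator)

lemma integral_indicator_disjoint_UN:
  fixes g :: "'a::euclidean_space \<Rightarrow> real"
  assumes \<Omega>: "open \<Omega>" and g: "integrable (lebesgue_on \<Omega>) g"
    and B: "\<And>i. B i \<in> sets borel" "\<And>i. B i \<subseteq> \<Omega>" and disj: "disjoint_family B"
  shows "integral\<^sup>L (lebesgue_on \<Omega>) (\<lambda>x. indicator (\<Union>i. B i) x * g x) =
    (\<Sum>i. integral\<^sup>L (lebesgue_on \<Omega>) (\<lambda>x. indicator (B i) x * g x))"
proof -
  have sets: "B i \<in> sets (lebesgue_on \<Omega>)" for i
    using B by (simp add: sets_lebesgue_on_iff[OF \<Omega>])
  have disj': "B i \<inter> B j = {}" if "i \<noteq> j" for i j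
    using disj that unfolding disjoint_family_on_def by blast
  have "(\<Union>i. B i) \<in> sets borel"
    using B(1) by (intro sets.countable_UN) auto
  then have "set_integrable (lebesgue_on \<Omega>) (\<Union>i. B i) g"
    unfolding set_integrable_def using integrable_indicator_borel_mult[OF g] by simp
  with sets disj' have "set_lebesgue_integral (lebesgue_on \<Omega>) (\<Union>i. B i) g =
      (\<Sum>i. set_lebesgue_integral (lebesgue_on \<Omega>) (B i) g)"
    by (rule lebesgue_integral_countable_add)
  then show ?thesis
    by (simp add: set_lebesgue_integral_def)
qed

lemma integral_indicator_borel_Int_box_eq_0:
  fixes g :: "'a::euclidean_space \<Rightarrow> real"
  assumes \<Omega>: "open \<Omega>" and g: "integrable (lebesgue_on \<Omega>) g"
    and orth: "\<And>\<phi>. test_fun \<Omega> \<phi> \<Longrightarrow> integral\<^sup>L (lebesgue_on \<Omega>) (\<lambda>x. g x * \<phi> x) = 0"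
    and sub: "cbox a b \<subseteq> \<Omega>" and A: "A \<in> sets borel"
  shows "integral\<^sup>L (lebesgue_on \<Omega>) (\<lambda>x. indicator (A \<inter> box a b) x * g x) = 0"
proof -
  let ?G = "range (\<lambda>(c, d). box c d :: 'a set)"
  have sets_borel: "sets borel = sigma_sets UNIV ?G"
    by (subst borel_eq_box) (rule sets_measure_of, simp)
  have "Int_stable ?G"
    by (auto simp: Int_stable_def box_Int_box)
  moreover have "?G \<subseteq> Pow UNIV"
    by simp
  moreover have "A \<in> sigma_sets UNIV ?G"
    using A sets_borel by simp
  ultimately show ?thesis
  proof (induction rule: sigma_sets_induct_disjoint)
    case (basic A)
    then obtain c d where "A \<inter> box a b = box c d"
      by (auto simp: box_Int_box)
    moreover have "cbox c d \<subseteq> \<Omega>" if "box c d \<noteq> {}" "box c d \<subseteq> box a b"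
    proof -
      have "cbox c d = closure (box c d)"
        using that(1) by simp
      also have "\<dots> \<subseteq> closure (box a b)"
        by (rule closure_mono[OF that(2)])
      also have "\<dots> \<subseteq> cbox a b"
        by (rule closure_minimal[OF box_subset_cbox closed_cbox])
      finally show ?thesis
        using sub by blast
    qed
    ultimately show ?case
      using integral_indicator_box_eq_0[OF g orth] by (cases "box c d = {}") auto
  next
    case (compl A)
    then have "A \<in> sets borel"
      by (simp add: sets_borel)
    have "(\<lambda>x. indicator ((UNIV - A) \<inter> box a b) x * g x) =
        (\<lambda>x. indicator (box a b) x * g x - indicator (A \<inter> box a b) x * g x)"
      by (auto simp: indicator_def)
    moreover have "integrable (lebesgue_on \<Omega>) (\<lambda>x. indicator (A \<inter> box a b) x * g x)"
      using \<open>A \<in> sets borel\<close> by (intro integrable_indicator_borel_mult[OF g]) auto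
    ultimately have "integral\<^sup>L (lebesgue_on \<Omega>) (\<lambda>x. indicator ((UNIV - A) \<inter> box a b) x * g x) =
        integral\<^sup>L (lebesgue_on \<Omega>) (\<lambda>x. indicator (box a b) x * g x) -
        integral\<^sup>L (lebesgue_on \<Omega>) (\<lambda>x. indicator (A \<inter> box a b) x * g x)"
      using integrable_indicator_borel_mult[OF g, of "box a b"] by simp
    then show ?case
      using compl.IH integral_indicator_box_eq_0[OF g orth sub] by simp
  next
    case (union A)
    have "A i \<in> sets borel" for i
      using union.hyps(2) sets_borel by blast
    then have borel: "A i \<inter> box a b \<in> sets borel" for i
      by simp
    have sub': "A i \<inter> box a b \<subseteq> \<Omega>" for i
      using sub box_subset_cbox by blast
    have disj: "disjoint_family (\<lambda>i. A i \<inter> box a b)"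
      using union.hyps(1) by (auto simp: disjoint_family_on_def)
    have "(\<Union>i. A i) \<inter> box a b = (\<Union>i. A i \<inter> box a b)"
      by blast
    then show ?case
      using integral_indicator_disjoint_UN[OF \<Omega> g borel sub' disj] union.IH by simp
  qed simp
qed

lemma sets_lebesgue_on_AE_eq_borel:
  assumes \<Omega>: "open \<Omega>" and A: "A \<in> sets (lebesgue_on \<Omega>)"
  obtains S where "S \<in> sets borel" "AE x in lebesgue_on \<Omega>. x \<in> A \<longleftrightarrow> x \<in> S"
proof -
  have A': "A \<in> sets lebesgue" "A \<subseteq> \<Omega>"
    using A by (simp_all add: sets_lebesgue_on_iff[OF \<Omega>])
  obtain S N N' where SN: "A = S \<union> N" "N \<subseteq> N'" "N' \<in> null_sets lborel" "S \<in> sets lborel"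
    using A'(1) by (rule sets_completionE)
  have "N' \<inter> \<Omega> \<in> null_sets (lebesgue_on \<Omega>)"
    using \<Omega> null_set_Int2[OF null_sets_completionI[OF SN(3)], of \<Omega>]
    by (simp add: null_sets_restrict_space)
  then have "AE x in lebesgue_on \<Omega>. x \<in> A \<longleftrightarrow> x \<in> S"
    by (rule AE_not_in[THEN eventually_mono]) (use SN(1,2) A'(2) in blast)
  moreover have "S \<in> sets borel"
    using SN(4) by simp
  ultimately show thesis
    using that by blast
qed

lemma AE_box_eq_0:
  fixes g :: "'a::euclidean_space \<Rightarrow> real"
  assumes \<Omega>: "open \<Omega>" and g: "integrable (lebesgue_on \<Omega>) g"
    and orth: "\<And>\<phi>. test_fun \<Omega> \<phi> \<Longrightarrow> integral\<^sup>L (lebesgue_on \<Omega>) (\<lambda>x. g x * \<phi> x) = 0"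
    and sub: "cbox a b \<subseteq> \<Omega>"
  shows "AE x in lebesgue_on \<Omega>. x \<in> box a b \<longrightarrow> g x = 0"
proof -
  have "AE x in lebesgue_on \<Omega>. indicator (box a b) x * g x = 0"
  proof (rule sigma_finite_measure.density_zero)
    show "sigma_finite_measure (lebesgue_on \<Omega>)"
      using \<Omega> by (intro sigma_finite_measure_restrict_space sigma_finite_measure_lebesgue) auto
    show "integrable (lebesgue_on \<Omega>) (\<lambda>x. indicator (box a b) x * g x)"
      using integrable_indicator_borel_mult[OF g] by simp
    fix A assume A: "A \<in> sets (lebesgue_on \<Omega>)"
    then obtain S where S: "S \<in> sets borel" "AE x in lebesgue_on \<Omega>. x \<in> A \<longleftrightarrow> x \<in> S"
      by (rule sets_lebesgue_on_AE_eq_borel[OF \<Omega>])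
    from S(2) have ae: "AE x in lebesgue_on \<Omega>.
        indicator A x * (indicator (box a b) x * g x) = indicator (S \<inter> box a b) x * g x"
      by (rule eventually_mono) (simp add: indicator_def)
    have int_A: "integrable (lebesgue_on \<Omega>) (\<lambda>x. indicator A x * (indicator (box a b) x * g x))"
      using integrable_mult_indicator[OF A integrable_indicator_borel_mult[OF g, of "box a b"]]
      by simp
    have int_S: "integrable (lebesgue_on \<Omega>) (\<lambda>x. indicator (S \<inter> box a b) x * g x)"
      using S(1) by (intro integrable_indicator_borel_mult[OF g]) simp
    have "integral\<^sup>L (lebesgue_on \<Omega>) (\<lambda>x. indicator A x * (indicator (box a b) x * g x)) =
        integral\<^sup>L (lebesgue_on \<Omega>) (\<lambda>x. indicator (S \<inter> box a b) x * g x)"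
      by (rule integral_cong_AE[OF borel_measurable_integrable[OF int_A]
            borel_measurable_integrable[OF int_S] ae])
    then show "set_lebesgue_integral (lebesgue_on \<Omega>) A (\<lambda>x. indicator (box a b) x * g x) = 0"
      using integral_indicator_borel_Int_box_eq_0[OF \<Omega> g orth sub S(1)]
      by (simp add: set_lebesgue_integral_def)
  qed
  then show ?thesis
    by (rule eventually_mono) (simp add: indicator_def)
qed

lemma AE_zero_if_orthogonal_test_funs:
  fixes g :: "'a::euclidean_space \<Rightarrow> real"
  assumes \<Omega>: "open \<Omega>" and g: "integrable (lebesgue_on \<Omega>) g"
    and orth: "\<And>\<phi>. test_fun \<Omega> \<phi> \<Longrightarrow> integral\<^sup>L (lebesgue_on \<Omega>) (\<lambda>x. g x * \<phi> x) = 0"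
  shows "AE x in lebesgue_on \<Omega>. g x = 0"
proof -
  define \<B> where "\<B> = {box a b | a b. cbox a b \<subseteq> \<Omega>}"
  have open_\<B>: "open B" if "B \<in> \<B>" for B
    using that unfolding \<B>_def by auto
  obtain \<C> where \<C>: "\<C> \<subseteq> \<B>" "countable \<C>" "\<Union>\<C> = \<Union>\<B>"
    by (rule Lindelof[OF open_\<B>])
  have "\<Union>\<B> = \<Omega>"
  proof
    show "\<Union>\<B> \<subseteq> \<Omega>"
      unfolding \<B>_def using box_subset_cbox by blast
    show "\<Omega> \<subseteq> \<Union>\<B>"
    proof
      fix x assume "x \<in> \<Omega>"
      then obtain a b where "cbox a b \<subseteq> \<Omega>" "x \<in> box a b"
        by (rule open_contains_cbox[OF \<Omega>])
      then show "x \<in> \<Union>\<B>"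
        unfolding \<B>_def by blast
    qed
  qed
  have "AE x in lebesgue_on \<Omega>. \<forall>Q\<in>\<C>. x \<in> Q \<longrightarrow> g x = 0"
    using \<C>(1,2) AE_box_eq_0[OF \<Omega> g orth] unfolding \<B>_def
    by (intro AE_ball_countable') auto
  then show ?thesis
    by (rule AE_mp[OF _ AE_I2]) (use \<C>(3) \<open>\<Union>\<B> = \<Omega>\<close> in auto)
qed

lemma L2_borel_measurable: "L2 \<Omega> f \<Longrightarrow> f \<in> borel_measurable (lebesgue_on \<Omega>)"
  by (simp add: L2_def)

lemma L2_integrable_square: "L2 \<Omega> f \<Longrightarrow> integrable (lebesgue_on \<Omega>) (\<lambda>x. (f x)\<^sup>2)"
  by (simp add: L2_def)

lemma L2_integrable_mult:
  assumes "L2 \<Omega> f" "L2 \<Omega> g"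
  shows "integrable (lebesgue_on \<Omega>) (\<lambda>x. f x * g x)"
proof (rule Bochner_Integration.integrable_bound)
  show "integrable (lebesgue_on \<Omega>) (\<lambda>x. (f x)\<^sup>2 + (g x)\<^sup>2)"
    using L2_integrable_square[OF assms(1)] L2_integrable_square[OF assms(2)]
    by (rule Bochner_Integration.integrable_add)
  show "(\<lambda>x. f x * g x) \<in> borel_measurable (lebesgue_on \<Omega>)"
    using L2_borel_measurable[OF assms(1)] L2_borel_measurable[OF assms(2)]
    by (rule borel_measurable_times)
  have "norm (u * v) \<le> norm (u\<^sup>2 + v\<^sup>2)" for u v :: real
  proof -
    have "\<bar>u * v\<bar> \<le> 2 * \<bar>u\<bar> * \<bar>v\<bar>"
      by (simp add: abs_mult)
    also have "\<dots> \<le> \<bar>u\<bar>\<^sup>2 + \<bar>v\<bar>\<^sup>2"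
      by (rule sum_squares_bound)
    also have "\<dots> = \<bar>u\<^sup>2 + v\<^sup>2\<bar>"
      by simp
    finally show ?thesis
      by simp
  qed
  then show "AE x in lebesgue_on \<Omega>. norm (f x * g x) \<le> norm ((f x)\<^sup>2 + (g x)\<^sup>2)"
    by simp
qed

lemma L2_lincomb:
  assumes "L2 \<Omega> f" "L2 \<Omega> g"
  shows "L2 \<Omega> (\<lambda>x. a * f x + b * g x)"
proof -
  have "(\<lambda>x. a * f x + b * g x) \<in> borel_measurable (lebesgue_on \<Omega>)"
    using L2_borel_measurable[OF assms(1)] L2_borel_measurable[OF assms(2)] by measurable
  moreover have "(\<lambda>x. (a * f x + b * g x)\<^sup>2) =
      (\<lambda>x. a\<^sup>2 * (f x)\<^sup>2 + b\<^sup>2 * (g x)\<^sup>2 + 2 * a * b * (f x * g x))"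
    by (simp add: power2_eq_square algebra_simps)
  moreover have "integrable (lebesgue_on \<Omega>)
      (\<lambda>x. a\<^sup>2 * (f x)\<^sup>2 + b\<^sup>2 * (g x)\<^sup>2 + 2 * a * b * (f x * g x))"
    using L2_integrable_square[OF assms(1)] L2_integrable_square[OF assms(2)]
      L2_integrable_mult[OF assms] by simp
  ultimately show ?thesis
    unfolding L2_def by simp
qed

definition bounded_coeff :: "'a::euclidean_space set \<Rightarrow> ('a \<Rightarrow> real) \<Rightarrow> bool" where
  "bounded_coeff \<Omega> h \<longleftrightarrow> h \<in> borel_measurable (lebesgue_on \<Omega>) \<and> (\<exists>B. \<forall>x\<in>\<Omega>. \<bar>h x\<bar> \<le> B)"

lemma integrable_bounded_coeff_mult:
  assumes "bounded_coeff \<Omega> h" "integrable (lebesgue_on \<Omega>) f"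
  shows "integrable (lebesgue_on \<Omega>) (\<lambda>x. h x * f x)"
proof -
  obtain B where B: "\<forall>x\<in>\<Omega>. \<bar>h x\<bar> \<le> B"
    using assms(1) by (auto simp: bounded_coeff_def)
  show ?thesis
  proof (rule Bochner_Integration.integrable_bound)
    show "integrable (lebesgue_on \<Omega>) (\<lambda>x. B * f x)"
      using assms(2) by simp
    show "(\<lambda>x. h x * f x) \<in> borel_measurable (lebesgue_on \<Omega>)"
      using assms unfolding bounded_coeff_def by (intro borel_measurable_times) auto
    show "AE x in lebesgue_on \<Omega>. norm (h x * f x) \<le> norm (B * f x)"
      using B by (intro AE_I2) (auto simp: abs_mult intro!: mult_right_mono)
  qed
qed

lemma L2_bounded_coeff_mult:
  assumes "bounded_coeff \<Omega> h" "L2 \<Omega> f"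
  shows "L2 \<Omega> (\<lambda>x. h x * f x)"
proof -
  obtain B where B: "\<forall>x\<in>\<Omega>. \<bar>h x\<bar> \<le> B"
    using assms(1) by (auto simp: bounded_coeff_def)
  have "\<bar>(h x)\<^sup>2\<bar> \<le> B\<^sup>2" if "x \<in> \<Omega>" for x
    using power_mono[OF B[rule_format, OF that] abs_ge_zero, of 2] by (simp add: power_abs)
  then have "bounded_coeff \<Omega> (\<lambda>x. (h x)\<^sup>2)"
    using assms(1) unfolding bounded_coeff_def by auto
  then have "integrable (lebesgue_on \<Omega>) (\<lambda>x. (h x)\<^sup>2 * (f x)\<^sup>2)"
    using L2_integrable_square[OF assms(2)] by (rule integrable_bounded_coeff_mult)
  moreover have "(\<lambda>x. h x * f x) \<in> borel_measurable (lebesgue_on \<Omega>)"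
    using assms(1) L2_borel_measurable[OF assms(2)] unfolding bounded_coeff_def
    by (intro borel_measurable_times) auto
  ultimately show ?thesis
    unfolding L2_def by (simp add: power_mult_distrib)
qed

lemma L2v_integrable_inner:
  assumes "L2v \<Omega> u" "L2v \<Omega> v"
  shows "integrable (lebesgue_on \<Omega>) (\<lambda>x. u x \<bullet> v x)"
proof -
  have "integrable (lebesgue_on \<Omega>) (\<lambda>x. \<Sum>i\<in>Basis. (u x \<bullet> i) * (v x \<bullet> i))"
    using assms unfolding L2v_def by (intro Bochner_Integration.integrable_sum L2_integrable_mult) auto
  then show ?thesis
    by (simp add: euclidean_inner[symmetric])
qed

lemma L2v_lincomb:
  assumes "L2v \<Omega> u" "L2v \<Omega> v"
  shows "L2v \<Omega> (\<lambda>x. a *\<^sub>R u x + b *\<^sub>R v x)"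
  using assms unfolding L2v_def by (simp add: inner_add_left L2_lincomb)

lemma L2v_bounded_coeff_scaleR:
  assumes "bounded_coeff \<Omega> h" "L2v \<Omega> u"
  shows "L2v \<Omega> (\<lambda>x. h x *\<^sub>R u x)"
  using assms unfolding L2v_def by (simp add: L2_bounded_coeff_mult)

lemma bounded_coeffI:
  assumes "open \<Omega>" "continuous_on \<Omega> h" "\<forall>x\<in>\<Omega>. \<bar>h x\<bar> \<le> B"
  shows "bounded_coeff \<Omega> h"
  using assms continuous_imp_measurable_on_sets_lebesgue[OF assms(2)] unfolding bounded_coeff_def
  by auto

lemma continuous_on_C1_on: "C1_on \<Omega> f \<Longrightarrow> continuous_on \<Omega> f"
  unfolding C1_on_def
  by (meson continuous_at_imp_continuous_on differentiable_imp_continuous_within)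

section \<open>Weak derivatives on a bounded open set\<close>

locale bounded_open_set =
  fixes \<Omega> :: "'a::euclidean_space set"
  assumes bounded_dom: "bounded \<Omega>" and open_dom: "open \<Omega>"
begin

lemma finite_measure_dom: "finite_measure (lebesgue_on \<Omega>)"
  using bounded_dom open_dom by (intro finite_measure_lebesgue_on bounded_set_imp_lmeasurable) auto

lemma L2_const: "L2 \<Omega> (\<lambda>x. c)"
  using finite_measure.integrable_const[OF finite_measure_dom] by (simp add: L2_def)

lemma L2_integrable: "L2 \<Omega> f \<Longrightarrow> integrable (lebesgue_on \<Omega>) f"
  using L2_integrable_mult[OF _ L2_const, of f 1] by simp

lemma bounded_coeff_continuous:
  assumes "continuous_on UNIV h"
  shows "bounded_coeff \<Omega> h"
proof -
  have "compact (h ` closure \<Omega>)"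
    using assms bounded_dom by (intro compact_continuous_image continuous_on_subset[OF assms]) auto
  then have "bounded (h ` closure \<Omega>)"
    by (rule compact_imp_bounded)
  then obtain B where "\<forall>y\<in>h ` closure \<Omega>. norm y \<le> B"
    unfolding bounded_iff by blast
  then have "\<forall>x\<in>\<Omega>. \<bar>h x\<bar> \<le> B"
    using closure_subset by fastforce
  then show ?thesis
    using assms unfolding bounded_coeff_def
    by (auto intro: borel_measurable_lebesgue_on_if_borel borel_measurable_continuous_onI)
qed

lemma integrable_mult_test_fun:
  assumes "test_fun \<Omega> \<phi>" "integrable (lebesgue_on \<Omega>) f"
  shows "integrable (lebesgue_on \<Omega>) (\<lambda>x. f x * \<phi> x)"
  using integrable_bounded_coeff_mult[OF bounded_coeff_continuous[OF continuous_on_test_fun[OF assms(1)]]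
      assms(2)]
  by (simp add: mult.commute)

lemma integrable_mult_pd_test_fun:
  assumes "test_fun \<Omega> \<phi>" "i \<in> Basis" "integrable (lebesgue_on \<Omega>) f"
  shows "integrable (lebesgue_on \<Omega>) (\<lambda>x. f x * pd \<phi> x i)"
proof -
  have "continuous_on UNIV (\<lambda>x. pd \<phi> x i)"
    using assms(1,2) by (simp add: test_fun_def)
  from integrable_bounded_coeff_mult[OF bounded_coeff_continuous[OF this] assms(3)]
  show ?thesis
    by (simp add: mult.commute)
qed

lemma integrable_inner_cgrad_test_fun:
  assumes "test_fun \<Omega> \<phi>" "L2v \<Omega> v"
  shows "integrable (lebesgue_on \<Omega>) (\<lambda>x. v x \<bullet> cgrad \<phi> x)"
proof -
  have "integrable (lebesgue_on \<Omega>) (\<lambda>x. \<Sum>i\<in>Basis. (v x \<bullet> i) * pd \<phi> x i)"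
    using assms unfolding L2v_def
    by (intro Bochner_Integration.integrable_sum integrable_mult_pd_test_fun L2_integrable) auto
  then show ?thesis
    by (simp add: cgrad_def inner_sum_right mult.commute)
qed

lemma L2_AE_eq_if_test_fun_integrals_eq:
  assumes "L2 \<Omega> f" "L2 \<Omega> g"
    and eq: "\<And>\<phi>. test_fun \<Omega> \<phi> \<Longrightarrow>
      integral\<^sup>L (lebesgue_on \<Omega>) (\<lambda>x. f x * \<phi> x) = integral\<^sup>L (lebesgue_on \<Omega>) (\<lambda>x. g x * \<phi> x)"
  shows "AE x in lebesgue_on \<Omega>. f x = g x"
proof -
  have int: "integrable (lebesgue_on \<Omega>) f" "integrable (lebesgue_on \<Omega>) g"
    using assms(1,2) by (simp_all add: L2_integrable)
  have "AE x in lebesgue_on \<Omega>. f x - g x = 0"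
  proof (rule AE_zero_if_orthogonal_test_funs[OF open_dom])
    show "integrable (lebesgue_on \<Omega>) (\<lambda>x. f x - g x)"
      using int by simp
    fix \<phi> assume "test_fun \<Omega> \<phi>"
    then show "integral\<^sup>L (lebesgue_on \<Omega>) (\<lambda>x. (f x - g x) * \<phi> x) = 0"
      using eq integrable_mult_test_fun[of \<phi> f] integrable_mult_test_fun[of \<phi> g] int
      by (simp add: left_diff_distrib)
  qed
  then show ?thesis
    by (rule eventually_mono) simp
qed

lemma is_weak_grad_lincomb:
  assumes p: "L2 \<Omega> p1" "L2 \<Omega> p2"
    and G: "is_weak_grad \<Omega> p1 G1" "is_weak_grad \<Omega> p2 G2"
  shows "is_weak_grad \<Omega> (\<lambda>x. a * p1 x + b * p2 x) (\<lambda>x. a *\<^sub>R G1 x + b *\<^sub>R G2 x)"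
  unfolding is_weak_grad_def
proof (intro conjI allI impI ballI)
  show "L2v \<Omega> (\<lambda>x. a *\<^sub>R G1 x + b *\<^sub>R G2 x)"
    using G by (intro L2v_lincomb) (auto simp: is_weak_grad_def)
  fix \<phi> and i :: 'a assume t: "test_fun \<Omega> \<phi>" and i: "i \<in> Basis"
  have "L2 \<Omega> (\<lambda>x. G1 x \<bullet> i)" "L2 \<Omega> (\<lambda>x. G2 x \<bullet> i)"
    using G i by (simp_all add: is_weak_grad_def L2v_def)
  then have "integrable (lebesgue_on \<Omega>) (\<lambda>x. (G1 x \<bullet> i) * \<phi> x)"
    "integrable (lebesgue_on \<Omega>) (\<lambda>x. (G2 x \<bullet> i) * \<phi> x)"
    by (simp_all add: integrable_mult_test_fun[OF t] L2_integrable)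
  moreover have "integrable (lebesgue_on \<Omega>) (\<lambda>x. p1 x * pd \<phi> x i)"
    "integrable (lebesgue_on \<Omega>) (\<lambda>x. p2 x * pd \<phi> x i)"
    using p by (simp_all add: integrable_mult_pd_test_fun[OF t i] L2_integrable)
  moreover have "integral\<^sup>L (lebesgue_on \<Omega>) (\<lambda>x. p1 x * pd \<phi> x i) =
      - integral\<^sup>L (lebesgue_on \<Omega>) (\<lambda>x. (G1 x \<bullet> i) * \<phi> x)"
    "integral\<^sup>L (lebesgue_on \<Omega>) (\<lambda>x. p2 x * pd \<phi> x i) =
      - integral\<^sup>L (lebesgue_on \<Omega>) (\<lambda>x. (G2 x \<bullet> i) * \<phi> x)"
    using G t i unfolding is_weak_grad_def by blast+
  ultimately show "integral\<^sup>L (lebesgue_on \<Omega>) (\<lambda>x. (a * p1 x + b * p2 x) * pd \<phi> x i) =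
      - integral\<^sup>L (lebesgue_on \<Omega>) (\<lambda>x. ((a *\<^sub>R G1 x + b *\<^sub>R G2 x) \<bullet> i) * \<phi> x)"
    by (simp add: inner_add_left distrib_right mult.assoc)
qed

lemma is_weak_grad_unique:
  assumes "is_weak_grad \<Omega> p G" "is_weak_grad \<Omega> p G'"
  shows "AE x in lebesgue_on \<Omega>. G x = G' x"
proof -
  have "AE x in lebesgue_on \<Omega>. G x \<bullet> i = G' x \<bullet> i" if i: "i \<in> Basis" for i
  proof (rule L2_AE_eq_if_test_fun_integrals_eq)
    show "L2 \<Omega> (\<lambda>x. G x \<bullet> i)" "L2 \<Omega> (\<lambda>x. G' x \<bullet> i)"
      using assms i by (auto simp: is_weak_grad_def L2v_def)
    fix \<phi> assume "test_fun \<Omega> \<phi>"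
    then have "integral\<^sup>L (lebesgue_on \<Omega>) (\<lambda>x. p x * pd \<phi> x i) =
        - integral\<^sup>L (lebesgue_on \<Omega>) (\<lambda>x. (G x \<bullet> i) * \<phi> x)"
      "integral\<^sup>L (lebesgue_on \<Omega>) (\<lambda>x. p x * pd \<phi> x i) =
        - integral\<^sup>L (lebesgue_on \<Omega>) (\<lambda>x. (G' x \<bullet> i) * \<phi> x)"
      using assms i unfolding is_weak_grad_def by blast+
    then show "integral\<^sup>L (lebesgue_on \<Omega>) (\<lambda>x. (G x \<bullet> i) * \<phi> x) =
        integral\<^sup>L (lebesgue_on \<Omega>) (\<lambda>x. (G' x \<bullet> i) * \<phi> x)"
      by simp
  qed
  then have "AE x in lebesgue_on \<Omega>. \<forall>i\<in>Basis. G x \<bullet> i = G' x \<bullet> i"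
    by (rule AE_finite_allI[OF finite_Basis])
  then show ?thesis
    by (rule eventually_mono) (blast intro: euclidean_eqI)
qed

lemma is_weak_div_lincomb:
  assumes v: "L2v \<Omega> v1" "L2v \<Omega> v2"
    and D: "is_weak_div \<Omega> v1 g1" "is_weak_div \<Omega> v2 g2"
  shows "is_weak_div \<Omega> (\<lambda>x. a *\<^sub>R v1 x + b *\<^sub>R v2 x) (\<lambda>x. a * g1 x + b * g2 x)"
  unfolding is_weak_div_def
proof (intro conjI allI impI)
  show "L2 \<Omega> (\<lambda>x. a * g1 x + b * g2 x)"
    using D by (intro L2_lincomb) (auto simp: is_weak_div_def)
  fix \<phi> assume t: "test_fun \<Omega> \<phi>"
  have "L2 \<Omega> g1" "L2 \<Omega> g2"
    using D by (simp_all add: is_weak_div_def)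
  then have "integrable (lebesgue_on \<Omega>) (\<lambda>x. g1 x * \<phi> x)"
    "integrable (lebesgue_on \<Omega>) (\<lambda>x. g2 x * \<phi> x)"
    by (simp_all add: integrable_mult_test_fun[OF t] L2_integrable)
  moreover have "integrable (lebesgue_on \<Omega>) (\<lambda>x. v1 x \<bullet> cgrad \<phi> x)"
    "integrable (lebesgue_on \<Omega>) (\<lambda>x. v2 x \<bullet> cgrad \<phi> x)"
    using v by (simp_all add: integrable_inner_cgrad_test_fun[OF t])
  moreover have "ipv \<Omega> v1 (cgrad \<phi>) = - ip \<Omega> g1 \<phi>" "ipv \<Omega> v2 (cgrad \<phi>) = - ip \<Omega> g2 \<phi>"
    using D t unfolding is_weak_div_def by blast+
  ultimately show "ipv \<Omega> (\<lambda>x. a *\<^sub>R v1 x + b *\<^sub>R v2 x) (cgrad \<phi>) =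
      - ip \<Omega> (\<lambda>x. a * g1 x + b * g2 x) \<phi>"
    unfolding ipv_def ip_def by (simp add: inner_add_left distrib_right mult.assoc)
qed

lemma is_weak_div_unique:
  assumes "is_weak_div \<Omega> v g" "is_weak_div \<Omega> v g'"
  shows "AE x in lebesgue_on \<Omega>. g x = g' x"
proof (rule L2_AE_eq_if_test_fun_integrals_eq)
  show "L2 \<Omega> g" "L2 \<Omega> g'"
    using assms by (auto simp: is_weak_div_def)
  fix \<phi> assume "test_fun \<Omega> \<phi>"
  then have "ipv \<Omega> v (cgrad \<phi>) = - ip \<Omega> g \<phi>" "ipv \<Omega> v (cgrad \<phi>) = - ip \<Omega> g' \<phi>"
    using assms unfolding is_weak_div_def by blast+
  then show "integral\<^sup>L (lebesgue_on \<Omega>) (\<lambda>x. g x * \<phi> x) = integral\<^sup>L (lebesgue_on \<Omega>) (\<lambda>x. g' x * \<phi> x)"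
    by (simp add: ip_def)
qed

lemma is_weak_curl_lincomb:
  assumes w: "L2v \<Omega> w1" "L2v \<Omega> w2"
    and C: "is_weak_curl \<Omega> w1 C1" "is_weak_curl \<Omega> w2 C2"
  shows "is_weak_curl \<Omega> (\<lambda>x. a *\<^sub>R w1 x + b *\<^sub>R w2 x) (\<lambda>x i j. a * C1 x i j + b * C2 x i j)"
  unfolding is_weak_curl_def
proof (intro conjI allI impI ballI)
  fix i j :: 'a assume i: "i \<in> Basis" and j: "j \<in> Basis"
  show "L2 \<Omega> (\<lambda>x. a * C1 x i j + b * C2 x i j)"
    using C i j by (intro L2_lincomb) (auto simp: is_weak_curl_def)
  fix \<phi> assume t: "test_fun \<Omega> \<phi>"
  let ?F = "\<lambda>w x. (w x \<bullet> j) * pd \<phi> x i - (w x \<bullet> i) * pd \<phi> x j"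
  have "L2 \<Omega> (\<lambda>x. C1 x i j)" "L2 \<Omega> (\<lambda>x. C2 x i j)"
    using C i j by (simp_all add: is_weak_curl_def)
  then have "integrable (lebesgue_on \<Omega>) (\<lambda>x. C1 x i j * \<phi> x)"
    "integrable (lebesgue_on \<Omega>) (\<lambda>x. C2 x i j * \<phi> x)"
    by (simp_all add: integrable_mult_test_fun[OF t] L2_integrable)
  moreover have "integrable (lebesgue_on \<Omega>) (?F w)" if "L2v \<Omega> w" for w
  proof -
    have "L2 \<Omega> (\<lambda>x. w x \<bullet> i)" "L2 \<Omega> (\<lambda>x. w x \<bullet> j)"
      using that i j by (simp_all add: L2v_def)
    then show ?thesis
      using i j by (simp add: integrable_mult_pd_test_fun[OF t] L2_integrable)
  qed
  moreover have "integral\<^sup>L (lebesgue_on \<Omega>) (?F w1) = - integral\<^sup>L (lebesgue_on \<Omega>) (\<lambda>x. C1 x i j * \<phi> x)"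
    "integral\<^sup>L (lebesgue_on \<Omega>) (?F w2) = - integral\<^sup>L (lebesgue_on \<Omega>) (\<lambda>x. C2 x i j * \<phi> x)"
    using C t i j unfolding is_weak_curl_def by blast+
  moreover have "?F (\<lambda>x. a *\<^sub>R w1 x + b *\<^sub>R w2 x) = (\<lambda>x. a * ?F w1 x + b * ?F w2 x)"
    by (simp add: inner_add_left algebra_simps)
  ultimately show "integral\<^sup>L (lebesgue_on \<Omega>) (?F (\<lambda>x. a *\<^sub>R w1 x + b *\<^sub>R w2 x)) =
      - integral\<^sup>L (lebesgue_on \<Omega>) (\<lambda>x. (a * C1 x i j + b * C2 x i j) * \<phi> x)"
    using w by (simp add: distrib_right mult.assoc)
qed

lemma is_weak_curl_unique:
  assumes "is_weak_curl \<Omega> w C" "is_weak_curl \<Omega> w C'"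
  shows "AE x in lebesgue_on \<Omega>. \<forall>i\<in>Basis. \<forall>j\<in>Basis. C x i j = C' x i j"
proof (rule AE_finite_allI[OF finite_Basis], rule AE_finite_allI[OF finite_Basis])
  fix i j :: 'a assume i: "i \<in> Basis" and j: "j \<in> Basis"
  show "AE x in lebesgue_on \<Omega>. C x i j = C' x i j"
  proof (rule L2_AE_eq_if_test_fun_integrals_eq)
    show "L2 \<Omega> (\<lambda>x. C x i j)" "L2 \<Omega> (\<lambda>x. C' x i j)"
      using assms i j by (auto simp: is_weak_curl_def)
    fix \<phi> assume "test_fun \<Omega> \<phi>"
    then have "integral\<^sup>L (lebesgue_on \<Omega>) (\<lambda>x. (w x \<bullet> j) * pd \<phi> x i - (w x \<bullet> i) * pd \<phi> x j) =
        - integral\<^sup>L (lebesgue_on \<Omega>) (\<lambda>x. C x i j * \<phi> x)"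
      "integral\<^sup>L (lebesgue_on \<Omega>) (\<lambda>x. (w x \<bullet> j) * pd \<phi> x i - (w x \<bullet> i) * pd \<phi> x j) =
        - integral\<^sup>L (lebesgue_on \<Omega>) (\<lambda>x. C' x i j * \<phi> x)"
      using assms i j unfolding is_weak_curl_def by blast+
    then show "integral\<^sup>L (lebesgue_on \<Omega>) (\<lambda>x. C x i j * \<phi> x) =
        integral\<^sup>L (lebesgue_on \<Omega>) (\<lambda>x. C' x i j * \<phi> x)"
      by simp
  qed
qed

end

lemma is_weak_grad_wgrad: "H1 \<Omega> p \<Longrightarrow> is_weak_grad \<Omega> p (wgrad \<Omega> p)"
  unfolding H1_def wgrad_def by (metis someI_ex)

lemma is_weak_div_wdiv:
  assumes "is_weak_div \<Omega> v g"
  shows "is_weak_div \<Omega> v (wdiv \<Omega> v)"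
  using assms unfolding wdiv_def by (metis someI)

lemma is_weak_curl_wcurl:
  assumes "is_weak_curl \<Omega> w C"
  shows "is_weak_curl \<Omega> w (wcurl \<Omega> w)"
  using assms unfolding wcurl_def by (metis someI)

lemma L2v_wgrad: "H1 \<Omega> p \<Longrightarrow> L2v \<Omega> (wgrad \<Omega> p)"
  using is_weak_grad_wgrad unfolding is_weak_grad_def by blast

lemma Uspace_is_weak_div: "Uspace \<Omega> lam v \<Longrightarrow> is_weak_div \<Omega> v (wdiv \<Omega> v)"
  unfolding Uspace_def using is_weak_div_wdiv by blast

lemma Uspace_is_weak_curl:
  "Uspace \<Omega> lam v \<Longrightarrow> is_weak_curl \<Omega> (\<lambda>x. lam x *\<^sub>R v x) (wcurl \<Omega> (\<lambda>x. lam x *\<^sub>R v x))"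
  unfolding Uspace_def using is_weak_curl_wcurl by blast

lemma Pspace_H1: "Pspace \<Omega> p \<Longrightarrow> H1 \<Omega> p"
  by (simp add: Pspace_def)

lemma Uspace_L2v: "Uspace \<Omega> lam v \<Longrightarrow> L2v \<Omega> v"
  by (simp add: Uspace_def)

lemma L2_wdiv: "Uspace \<Omega> lam v \<Longrightarrow> L2 \<Omega> (wdiv \<Omega> v)"
  using Uspace_is_weak_div unfolding is_weak_div_def by blast

lemma L2_wcurl:
  "Uspace \<Omega> lam v \<Longrightarrow> i \<in> Basis \<Longrightarrow> j \<in> Basis \<Longrightarrow>
    L2 \<Omega> (\<lambda>x. wcurl \<Omega> (\<lambda>x. lam x *\<^sub>R v x) x i j)"
  using Uspace_is_weak_curl unfolding is_weak_curl_def by blast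

context bounded_open_set
begin

lemma H1_lincomb:
  assumes "H1 \<Omega> p1" "H1 \<Omega> p2"
  shows "H1 \<Omega> (\<lambda>x. a * p1 x + b * p2 x)"
  using assms is_weak_grad_lincomb[OF _ _ is_weak_grad_wgrad is_weak_grad_wgrad]
  unfolding H1_def by (blast intro: L2_lincomb)

lemma AE_wgrad_lincomb:
  assumes "H1 \<Omega> p1" "H1 \<Omega> p2"
  shows "AE x in lebesgue_on \<Omega>.
    wgrad \<Omega> (\<lambda>x. a * p1 x + b * p2 x) x = a *\<^sub>R wgrad \<Omega> p1 x + b *\<^sub>R wgrad \<Omega> p2 x"
proof -
  have "is_weak_grad \<Omega> (\<lambda>x. a * p1 x + b * p2 x) (\<lambda>x. a *\<^sub>R wgrad \<Omega> p1 x + b *\<^sub>R wgrad \<Omega> p2 x)"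
    using assms by (intro is_weak_grad_lincomb is_weak_grad_wgrad) (simp_all add: H1_def)
  then show ?thesis
    by (rule is_weak_grad_unique[OF is_weak_grad_wgrad[OF H1_lincomb[OF assms]]])
qed

lemma Pspace_lincomb:
  assumes "Pspace \<Omega> p1" "Pspace \<Omega> p2"
  shows "Pspace \<Omega> (\<lambda>x. a * p1 x + b * p2 x)"
proof -
  have "L2 \<Omega> p1" "L2 \<Omega> p2"
    using assms by (simp_all add: Pspace_def H1_def)
  then have "integrable (lebesgue_on \<Omega>) p1" "integrable (lebesgue_on \<Omega>) p2"
    by (simp_all add: L2_integrable)
  then show ?thesis
    using assms H1_lincomb unfolding Pspace_def ip_def by simp
qed

lemma AE_wdiv_lincomb:
  assumes "Uspace \<Omega> lam v1" "Uspace \<Omega> lam v2"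
  shows "AE x in lebesgue_on \<Omega>.
    wdiv \<Omega> (\<lambda>x. a *\<^sub>R v1 x + b *\<^sub>R v2 x) x = a * wdiv \<Omega> v1 x + b * wdiv \<Omega> v2 x"
proof -
  have lin: "is_weak_div \<Omega> (\<lambda>x. a *\<^sub>R v1 x + b *\<^sub>R v2 x) (\<lambda>x. a * wdiv \<Omega> v1 x + b * wdiv \<Omega> v2 x)"
    using is_weak_div_lincomb[OF Uspace_L2v[OF assms(1)] Uspace_L2v[OF assms(2)]
        Uspace_is_weak_div[OF assms(1)] Uspace_is_weak_div[OF assms(2)]] .
  then show ?thesis
    by (rule is_weak_div_unique[OF is_weak_div_wdiv[OF lin]])
qed

lemma AE_wcurl_lincomb:
  assumes "bounded_coeff \<Omega> lam" "Uspace \<Omega> lam v1" "Uspace \<Omega> lam v2"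
  shows "AE x in lebesgue_on \<Omega>. \<forall>i\<in>Basis. \<forall>j\<in>Basis.
    wcurl \<Omega> (\<lambda>x. lam x *\<^sub>R (a *\<^sub>R v1 x + b *\<^sub>R v2 x)) x i j =
      a * wcurl \<Omega> (\<lambda>x. lam x *\<^sub>R v1 x) x i j + b * wcurl \<Omega> (\<lambda>x. lam x *\<^sub>R v2 x) x i j"
proof -
  have "is_weak_curl \<Omega> (\<lambda>x. a *\<^sub>R (lam x *\<^sub>R v1 x) + b *\<^sub>R (lam x *\<^sub>R v2 x))
      (\<lambda>x i j. a * wcurl \<Omega> (\<lambda>x. lam x *\<^sub>R v1 x) x i j + b * wcurl \<Omega> (\<lambda>x. lam x *\<^sub>R v2 x) x i j)"
    using is_weak_curl_lincomb[OF L2v_bounded_coeff_scaleR[OF assms(1) Uspace_L2v[OF assms(2)]]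
        L2v_bounded_coeff_scaleR[OF assms(1) Uspace_L2v[OF assms(3)]]
        Uspace_is_weak_curl[OF assms(2)] Uspace_is_weak_curl[OF assms(3)]] .
  moreover have "(\<lambda>x. a *\<^sub>R (lam x *\<^sub>R v1 x) + b *\<^sub>R (lam x *\<^sub>R v2 x)) =
      (\<lambda>x. lam x *\<^sub>R (a *\<^sub>R v1 x + b *\<^sub>R v2 x))"
    by (simp add: algebra_simps)
  ultimately have lin: "is_weak_curl \<Omega> (\<lambda>x. lam x *\<^sub>R (a *\<^sub>R v1 x + b *\<^sub>R v2 x))
      (\<lambda>x i j. a * wcurl \<Omega> (\<lambda>x. lam x *\<^sub>R v1 x) x i j + b * wcurl \<Omega> (\<lambda>x. lam x *\<^sub>R v2 x) x i j)"
    by simp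
  then show ?thesis
    by (rule is_weak_curl_unique[OF is_weak_curl_wcurl[OF lin]])
qed

lemma normal_trace_zero_lincomb:
  assumes v: "Uspace \<Omega> lam v1" "Uspace \<Omega> lam v2"
  shows "normal_trace_zero \<Omega> (\<lambda>x. a *\<^sub>R v1 x + b *\<^sub>R v2 x)"
  unfolding normal_trace_zero_def
proof (intro allI impI)
  let ?v = "\<lambda>x. a *\<^sub>R v1 x + b *\<^sub>R v2 x"
  fix \<phi> assume \<phi>: "H1 \<Omega> \<phi>"
  have L2: "L2v \<Omega> (wgrad \<Omega> \<phi>)" "L2 \<Omega> \<phi>"
    using \<phi> by (simp_all add: L2v_wgrad H1_def)
  have "integrable (lebesgue_on \<Omega>) (\<lambda>x. v1 x \<bullet> wgrad \<Omega> \<phi> x)"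
    "integrable (lebesgue_on \<Omega>) (\<lambda>x. v2 x \<bullet> wgrad \<Omega> \<phi> x)"
    using v L2 by (simp_all add: L2v_integrable_inner Uspace_def)
  then have grad: "ipv \<Omega> ?v (wgrad \<Omega> \<phi>) = a * ipv \<Omega> v1 (wgrad \<Omega> \<phi>) + b * ipv \<Omega> v2 (wgrad \<Omega> \<phi>)"
    unfolding ipv_def by (simp add: inner_add_left)
  have int: "integrable (lebesgue_on \<Omega>) (\<lambda>x. wdiv \<Omega> v1 x * \<phi> x)"
    "integrable (lebesgue_on \<Omega>) (\<lambda>x. wdiv \<Omega> v2 x * \<phi> x)"
    using v L2 by (simp_all add: L2_integrable_mult L2_wdiv)
  have "integral\<^sup>L (lebesgue_on \<Omega>) (\<lambda>x. wdiv \<Omega> ?v x * \<phi> x) =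
      integral\<^sup>L (lebesgue_on \<Omega>) (\<lambda>x. a * (wdiv \<Omega> v1 x * \<phi> x) + b * (wdiv \<Omega> v2 x * \<phi> x))"
  proof (rule integral_cong_AE)
    have "L2 \<Omega> (wdiv \<Omega> ?v)"
      using is_weak_div_lincomb[OF Uspace_L2v[OF v(1)] Uspace_L2v[OF v(2)]
          Uspace_is_weak_div[OF v(1)] Uspace_is_weak_div[OF v(2)]] is_weak_div_wdiv
      unfolding is_weak_div_def by blast
    then show "(\<lambda>x. wdiv \<Omega> ?v x * \<phi> x) \<in> borel_measurable (lebesgue_on \<Omega>)"
      using L2 by (intro borel_measurable_integrable L2_integrable_mult)
    show "(\<lambda>x. a * (wdiv \<Omega> v1 x * \<phi> x) + b * (wdiv \<Omega> v2 x * \<phi> x)) \<in> borel_measurable (lebesgue_on \<Omega>)"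
      using int by (intro borel_measurable_integrable) simp
    show "AE x in lebesgue_on \<Omega>. wdiv \<Omega> ?v x * \<phi> x = a * (wdiv \<Omega> v1 x * \<phi> x) + b * (wdiv \<Omega> v2 x * \<phi> x)"
      using AE_wdiv_lincomb[OF v, of a b] by (rule eventually_mono) (simp add: algebra_simps)
  qed
  then have div: "ip \<Omega> (wdiv \<Omega> ?v) \<phi> = a * ip \<Omega> (wdiv \<Omega> v1) \<phi> + b * ip \<Omega> (wdiv \<Omega> v2) \<phi>"
    using int unfolding ip_def by simp
  have "ipv \<Omega> ?v (wgrad \<Omega> \<phi>) + ip \<Omega> (wdiv \<Omega> ?v) \<phi> =
      a * (ipv \<Omega> v1 (wgrad \<Omega> \<phi>) + ip \<Omega> (wdiv \<Omega> v1) \<phi>) +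
      b * (ipv \<Omega> v2 (wgrad \<Omega> \<phi>) + ip \<Omega> (wdiv \<Omega> v2) \<phi>)"
    unfolding grad div by (simp add: algebra_simps)
  then show "ipv \<Omega> ?v (wgrad \<Omega> \<phi>) + ip \<Omega> (wdiv \<Omega> ?v) \<phi> = 0"
    using v \<phi> by (simp add: Uspace_def normal_trace_zero_def)
qed

lemma Uspace_lincomb:
  assumes lam: "bounded_coeff \<Omega> lam" and v: "Uspace \<Omega> lam v1" "Uspace \<Omega> lam v2"
  shows "Uspace \<Omega> lam (\<lambda>x. a *\<^sub>R v1 x + b *\<^sub>R v2 x)"
  unfolding Uspace_def
proof (intro conjI)
  let ?v = "\<lambda>x. a *\<^sub>R v1 x + b *\<^sub>R v2 x"
  show "L2v \<Omega> ?v"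
    using v by (intro L2v_lincomb) (simp_all add: Uspace_def)
  show "\<exists>g. is_weak_div \<Omega> ?v g"
    using is_weak_div_lincomb[OF Uspace_L2v[OF v(1)] Uspace_L2v[OF v(2)]
        Uspace_is_weak_div[OF v(1)] Uspace_is_weak_div[OF v(2)]] by blast
  have "(\<lambda>x. lam x *\<^sub>R ?v x) = (\<lambda>x. a *\<^sub>R (lam x *\<^sub>R v1 x) + b *\<^sub>R (lam x *\<^sub>R v2 x))"
    by (simp add: algebra_simps)
  then show "\<exists>C. is_weak_curl \<Omega> (\<lambda>x. lam x *\<^sub>R ?v x) C"
    using is_weak_curl_lincomb[OF L2v_bounded_coeff_scaleR[OF lam Uspace_L2v[OF v(1)]]
        L2v_bounded_coeff_scaleR[OF lam Uspace_L2v[OF v(2)]]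
        Uspace_is_weak_curl[OF v(1)] Uspace_is_weak_curl[OF v(2)]] by auto
  show "normal_trace_zero \<Omega> ?v"
    using normal_trace_zero_lincomb[OF v] .
qed

end

lemma poly_le_lincomb:
  assumes "poly_le m P1" "poly_le m P2"
  shows "poly_le m (\<lambda>x. a * P1 x + b * P2 x)"
proof -
  obtain c1 c2 where
    "\<forall>x. P1 x = (\<Sum>\<alpha>\<in>multi_idx m. c1 \<alpha> * (\<Prod>i\<in>Basis. (x \<bullet> i) ^ \<alpha> i))"
    "\<forall>x. P2 x = (\<Sum>\<alpha>\<in>multi_idx m. c2 \<alpha> * (\<Prod>i\<in>Basis. (x \<bullet> i) ^ \<alpha> i))"
    using assms unfolding poly_le_def by blast
  then show ?thesis
    unfolding poly_le_def
    by (intro exI[of _ "\<lambda>\<alpha>. a * c1 \<alpha> + b * c2 \<alpha>"])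
      (simp add: sum.distrib sum_distrib_left algebra_simps)
qed

lemma Sh_lincomb:
  assumes "Sh \<Omega> T m f1" "Sh \<Omega> T m f2"
  shows "Sh \<Omega> T m (\<lambda>x. a * f1 x + b * f2 x)"
  unfolding Sh_def
proof (intro conjI ballI)
  show "continuous_on \<Omega> (\<lambda>x. a * f1 x + b * f2 x)"
    using assms unfolding Sh_def by (intro continuous_intros) auto
  fix e assume "e \<in> T"
  then obtain P1 P2 where "poly_le m P1" "\<forall>x\<in>e \<inter> \<Omega>. f1 x = P1 x"
    "poly_le m P2" "\<forall>x\<in>e \<inter> \<Omega>. f2 x = P2 x"
    using assms unfolding Sh_def by meson
  then show "\<exists>P. poly_le m P \<and> (\<forall>x\<in>e \<inter> \<Omega>. a * f1 x + b * f2 x = P x)"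
    by (intro exI[of _ "\<lambda>x. a * P1 x + b * P2 x"] conjI poly_le_lincomb) auto
qed

context bounded_open_set
begin

lemma Uh_lincomb:
  assumes "bounded_coeff \<Omega> lam" "Uh \<Omega> lam T l v1" "Uh \<Omega> lam T l v2"
  shows "Uh \<Omega> lam T l (\<lambda>x. a *\<^sub>R v1 x + b *\<^sub>R v2 x)"
  using assms unfolding Uh_def by (simp add: inner_add_left Sh_lincomb Uspace_lincomb)

lemma Ph_lincomb:
  assumes "Ph \<Omega> T k q1" "Ph \<Omega> T k q2"
  shows "Ph \<Omega> T k (\<lambda>x. a * q1 x + b * q2 x)"
  using assms Sh_lincomb Pspace_lincomb unfolding Ph_def by blast

lemma Uspace_diff:
  "bounded_coeff \<Omega> lam \<Longrightarrow> Uspace \<Omega> lam v1 \<Longrightarrow> Uspace \<Omega> lam v2 \<Longrightarrow>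
    Uspace \<Omega> lam (\<lambda>x. v1 x - v2 x)"
  using Uspace_lincomb[of lam v1 v2 1 "-1"] by simp

lemma Pspace_diff: "Pspace \<Omega> q1 \<Longrightarrow> Pspace \<Omega> q2 \<Longrightarrow> Pspace \<Omega> (\<lambda>x. q1 x - q2 x)"
  using Pspace_lincomb[of q1 q2 1 "-1"] by simp

lemma Uh_diff:
  "bounded_coeff \<Omega> lam \<Longrightarrow> Uh \<Omega> lam T l v1 \<Longrightarrow> Uh \<Omega> lam T l v2 \<Longrightarrow>
    Uh \<Omega> lam T l (\<lambda>x. v1 x - v2 x)"
  using Uh_lincomb[of lam T l v1 v2 1 "-1"] by simp

lemma Ph_diff: "Ph \<Omega> T k q1 \<Longrightarrow> Ph \<Omega> T k q2 \<Longrightarrow> Ph \<Omega> T k (\<lambda>x. q1 x - q2 x)"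
  using Ph_lincomb[of T k q1 q2 1 "-1"] by simp

end

section \<open>The CGLS bilinear form\<close>

text \<open>The integrand of \<^const>\<open>B_CGLS\<close>, evaluated at a point: the arguments are
  \<open>\<lambda>, \<kappa>\<close> followed by the values of \<open>u, div u, curl (\<lambda>u), p, \<nabla>p\<close> and of \<open>v, div v, curl (\<lambda>v), q, \<nabla>q\<close>.\<close>
definition cgls_pt :: "real \<Rightarrow> real \<Rightarrow> 'a::euclidean_space \<Rightarrow> real \<Rightarrow> ('a \<Rightarrow> 'a \<Rightarrow> real) \<Rightarrow> real \<Rightarrow> 'a
    \<Rightarrow> 'a \<Rightarrow> real \<Rightarrow> ('a \<Rightarrow> 'a \<Rightarrow> real) \<Rightarrow> real \<Rightarrow> 'a \<Rightarrow> real" where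
  "cgls_pt l k u D C p G v D' C' q G' = l * (u \<bullet> v) - D' * p - D * q
     - 1/2 * (k * ((l *\<^sub>R u + G) \<bullet> (l *\<^sub>R v + G'))) + 1/2 * (l * D * D')
     + 1/2 * (k * ((\<Sum>i\<in>Basis. \<Sum>j\<in>Basis. C i j * C' i j) / 2))"

definition norm_sq_pt :: "'a::euclidean_space \<Rightarrow> real \<Rightarrow> ('a \<Rightarrow> 'a \<Rightarrow> real) \<Rightarrow> 'a \<Rightarrow> real" where
  "norm_sq_pt u D C G = u \<bullet> u + D * D + (\<Sum>i\<in>Basis. \<Sum>j\<in>Basis. C i j * C i j) / 2 + G \<bullet> G"

lemma cgls_pt_lincomb_left:
  assumes "\<forall>i\<in>Basis. \<forall>j\<in>Basis. C i j = a * C1 i j + b * C2 i j"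
  shows "cgls_pt l k (a *\<^sub>R u1 + b *\<^sub>R u2) (a * D1 + b * D2) C (a * p1 + b * p2) (a *\<^sub>R G1 + b *\<^sub>R G2)
      v D' C' q G' =
    a * cgls_pt l k u1 D1 C1 p1 G1 v D' C' q G' + b * cgls_pt l k u2 D2 C2 p2 G2 v D' C' q G'"
proof -
  have "(\<Sum>i\<in>Basis. \<Sum>j\<in>Basis. C i j * C' i j) =
      a * (\<Sum>i\<in>Basis. \<Sum>j\<in>Basis. C1 i j * C' i j) + b * (\<Sum>i\<in>Basis. \<Sum>j\<in>Basis. C2 i j * C' i j)"
    using assms by (simp add: sum.distrib sum_distrib_left distrib_right mult.assoc)
  then show ?thesis
    unfolding cgls_pt_def by (simp add: algebra_simps inner_add_left)
qed

text \<open>Testing with \<open>{u, -p}\<close> cancels the pressure coupling terms, and \<open>\<lambda>\<kappa> = 1\<close>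
  turns \<open>\<lambda>|u|\<^sup>2 - \<kappa>(\<lambda>\<^sup>2|u|\<^sup>2 - |G|\<^sup>2)/2\<close> into \<open>(\<lambda>|u|\<^sup>2 + \<kappa>|G|\<^sup>2)/2\<close>.\<close>
lemma cgls_pt_coercive:
  assumes lk: "l * k = 1" and "m \<le> l" "m' \<le> k"
  shows "1/2 * min m m' * norm_sq_pt u D C G \<le> cgls_pt l k u D C p G u D C (- p) (- G)"
proof -
  define S where "S = (\<Sum>i\<in>Basis. \<Sum>j\<in>Basis. C i j * C i j) / 2"
  have kl: "k * (l * (l * (u \<bullet> u))) = l * (u \<bullet> u)"
    using lk by (metis mult.assoc mult.commute mult_1)
  have cgls: "cgls_pt l k u D C p G u D C (- p) (- G) =
      1/2 * l * (u \<bullet> u) + 1/2 * k * (G \<bullet> G) + 1/2 * l * (D * D) + 1/2 * k * S"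
    unfolding cgls_pt_def S_def
    by (simp add: algebra_simps inner_add_left inner_add_right inner_commute kl)
  let ?\<alpha> = "1/2 * min m m'"
  have \<alpha>: "?\<alpha> \<le> 1/2 * l" "?\<alpha> \<le> 1/2 * k"
    using assms by auto
  have "0 \<le> S"
    unfolding S_def by (intro divide_nonneg_pos sum_nonneg) auto
  then have "?\<alpha> * (u \<bullet> u) \<le> 1/2 * l * (u \<bullet> u)" "?\<alpha> * (G \<bullet> G) \<le> 1/2 * k * (G \<bullet> G)"
    "?\<alpha> * (D * D) \<le> 1/2 * l * (D * D)" "?\<alpha> * S \<le> 1/2 * k * S"
    using \<alpha> by (auto intro: mult_right_mono)
  moreover have "?\<alpha> * norm_sq_pt u D C G = ?\<alpha> * (u \<bullet> u) + ?\<alpha> * (D * D) + ?\<alpha> * S + ?\<alpha> * (G \<bullet> G)"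
    unfolding norm_sq_pt_def S_def by (simp only: distrib_left)
  ultimately show ?thesis
    unfolding cgls by linarith
qed

definition cgls_density :: "'a::euclidean_space set \<Rightarrow> ('a \<Rightarrow> real) \<Rightarrow> ('a \<Rightarrow> real)
    \<Rightarrow> ('a \<Rightarrow> 'a) \<Rightarrow> ('a \<Rightarrow> real) \<Rightarrow> ('a \<Rightarrow> 'a) \<Rightarrow> ('a \<Rightarrow> real) \<Rightarrow> 'a \<Rightarrow> real" where
  "cgls_density \<Omega> lam kap u p v q x =
    cgls_pt (lam x) (kap x) (u x) (wdiv \<Omega> u x) (wcurl \<Omega> (\<lambda>x. lam x *\<^sub>R u x) x) (p x) (wgrad \<Omega> p x)
      (v x) (wdiv \<Omega> v x) (wcurl \<Omega> (\<lambda>x. lam x *\<^sub>R v x) x) (q x) (wgrad \<Omega> q x)"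

definition norm_sq_density :: "'a::euclidean_space set \<Rightarrow> ('a \<Rightarrow> real) \<Rightarrow> ('a \<Rightarrow> 'a)
    \<Rightarrow> ('a \<Rightarrow> real) \<Rightarrow> 'a \<Rightarrow> real" where
  "norm_sq_density \<Omega> lam u p x =
    norm_sq_pt (u x) (wdiv \<Omega> u x) (wcurl \<Omega> (\<lambda>x. lam x *\<^sub>R u x) x) (wgrad \<Omega> p x)"

lemma B_CGLS_sym: "B_CGLS \<Omega> lam kap u p v q = B_CGLS \<Omega> lam kap v q u p"
proof -
  have "ipv \<Omega> (\<lambda>x. lam x *\<^sub>R u x) v = ipv \<Omega> (\<lambda>x. lam x *\<^sub>R v x) u"
    unfolding ipv_def by (simp add: inner_commute)
  moreover have "ipv \<Omega> (\<lambda>x. kap x *\<^sub>R (lam x *\<^sub>R u x + wgrad \<Omega> p x)) (\<lambda>x. lam x *\<^sub>R v x + wgrad \<Omega> q x) =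
      ipv \<Omega> (\<lambda>x. kap x *\<^sub>R (lam x *\<^sub>R v x + wgrad \<Omega> q x)) (\<lambda>x. lam x *\<^sub>R u x + wgrad \<Omega> p x)"
    unfolding ipv_def by (simp add: inner_commute)
  moreover have "ip \<Omega> (\<lambda>x. lam x * wdiv \<Omega> u x) (wdiv \<Omega> v) = ip \<Omega> (\<lambda>x. lam x * wdiv \<Omega> v x) (wdiv \<Omega> u)"
    unfolding ip_def by (simp add: mult_ac)
  moreover have "curl_ip \<Omega> kap C C' = curl_ip \<Omega> kap C' C" for C C'
    unfolding curl_ip_def by (simp add: mult.commute)
  ultimately show ?thesis
    unfolding B_CGLS_def by simp
qed

context bounded_open_set
begin

lemma B_CGLS_as_integral:
  assumes lam: "bounded_coeff \<Omega> lam" and kap: "bounded_coeff \<Omega> kap"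
    and u: "Uspace \<Omega> lam u" and p: "H1 \<Omega> p" and v: "Uspace \<Omega> lam v" and q: "H1 \<Omega> q"
  shows "integrable (lebesgue_on \<Omega>) (cgls_density \<Omega> lam kap u p v q)"
    and "B_CGLS \<Omega> lam kap u p v q = integral\<^sup>L (lebesgue_on \<Omega>) (cgls_density \<Omega> lam kap u p v q)"
proof -
  define Cu where "Cu = wcurl \<Omega> (\<lambda>x. lam x *\<^sub>R u x)"
  define Cv where "Cv = wcurl \<Omega> (\<lambda>x. lam x *\<^sub>R v x)"
  define f1 where "f1 x = lam x * (u x \<bullet> v x)" for x
  define f2 where "f2 x = wdiv \<Omega> v x * p x" for x
  define f3 where "f3 x = wdiv \<Omega> u x * q x" for x
  define f4 where "f4 x = kap x * ((lam x *\<^sub>R u x + wgrad \<Omega> p x) \<bullet> (lam x *\<^sub>R v x + wgrad \<Omega> q x))" for x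
  define f5 where "f5 x = lam x * (wdiv \<Omega> u x * wdiv \<Omega> v x)" for x
  define f6 where "f6 x = kap x * ((\<Sum>i\<in>Basis. \<Sum>j\<in>Basis. Cu x i j * Cv x i j) / 2)" for x
  have L2: "L2v \<Omega> u" "L2v \<Omega> v" "L2 \<Omega> p" "L2 \<Omega> q" "L2 \<Omega> (wdiv \<Omega> u)" "L2 \<Omega> (wdiv \<Omega> v)"
    using u v p q by (simp_all add: Uspace_L2v H1_def L2_wdiv)
  have i1: "integrable (lebesgue_on \<Omega>) f1"
    unfolding f1_def using L2 by (intro integrable_bounded_coeff_mult[OF lam] L2v_integrable_inner)
  have i23: "integrable (lebesgue_on \<Omega>) f2" "integrable (lebesgue_on \<Omega>) f3"
    unfolding f2_def f3_def using L2 by (simp_all add: L2_integrable_mult)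
  have "L2v \<Omega> (\<lambda>x. lam x *\<^sub>R u x + wgrad \<Omega> p x)" "L2v \<Omega> (\<lambda>x. lam x *\<^sub>R v x + wgrad \<Omega> q x)"
    using L2v_lincomb[OF L2v_bounded_coeff_scaleR[OF lam] L2v_wgrad, of _ _ 1 1] L2 p q by simp_all
  then have i4: "integrable (lebesgue_on \<Omega>) f4"
    unfolding f4_def by (intro integrable_bounded_coeff_mult[OF kap] L2v_integrable_inner)
  have i5: "integrable (lebesgue_on \<Omega>) f5"
    unfolding f5_def using L2 by (intro integrable_bounded_coeff_mult[OF lam] L2_integrable_mult)
  have "integrable (lebesgue_on \<Omega>) (\<lambda>x. \<Sum>i\<in>Basis. \<Sum>j\<in>Basis. Cu x i j * Cv x i j)"
    unfolding Cu_def Cv_def using u v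
    by (intro Bochner_Integration.integrable_sum L2_integrable_mult L2_wcurl)
  then have i6: "integrable (lebesgue_on \<Omega>) f6"
    unfolding f6_def by (intro integrable_bounded_coeff_mult[OF kap]) simp
  have density: "cgls_density \<Omega> lam kap u p v q =
      (\<lambda>x. f1 x - f2 x - f3 x - 1/2 * f4 x + 1/2 * f5 x + 1/2 * f6 x)"
    unfolding cgls_density_def cgls_pt_def f1_def f2_def f3_def f4_def f5_def f6_def Cu_def Cv_def
    by (simp add: mult.assoc)
  show "integrable (lebesgue_on \<Omega>) (cgls_density \<Omega> lam kap u p v q)"
    unfolding density using i1 i23 i4 i5 i6 by simp
  have "B_CGLS \<Omega> lam kap u p v q =
      integral\<^sup>L (lebesgue_on \<Omega>) f1 - integral\<^sup>L (lebesgue_on \<Omega>) f2 - integral\<^sup>L (lebesgue_on \<Omega>) f3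
      - 1/2 * integral\<^sup>L (lebesgue_on \<Omega>) f4 + 1/2 * integral\<^sup>L (lebesgue_on \<Omega>) f5
      + 1/2 * integral\<^sup>L (lebesgue_on \<Omega>) f6"
    unfolding B_CGLS_def ipv_def ip_def curl_ip_def f1_def f2_def f3_def f4_def f5_def f6_def Cu_def Cv_def
    by (simp add: mult.assoc)
  also have "\<dots> = integral\<^sup>L (lebesgue_on \<Omega>) (cgls_density \<Omega> lam kap u p v q)"
    unfolding density using i1 i23 i4 i5 i6 by simp
  finally show "B_CGLS \<Omega> lam kap u p v q = integral\<^sup>L (lebesgue_on \<Omega>) (cgls_density \<Omega> lam kap u p v q)" .
qed

lemma normUP_as_integral:
  assumes u: "Uspace \<Omega> lam u" and p: "H1 \<Omega> p"
  shows "integrable (lebesgue_on \<Omega>) (norm_sq_density \<Omega> lam u p)"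
    and "(normUP \<Omega> lam u p)\<^sup>2 = integral\<^sup>L (lebesgue_on \<Omega>) (norm_sq_density \<Omega> lam u p)"
    and "normUP \<Omega> lam u p = sqrt (integral\<^sup>L (lebesgue_on \<Omega>) (norm_sq_density \<Omega> lam u p))"
proof -
  define C where "C = wcurl \<Omega> (\<lambda>x. lam x *\<^sub>R u x)"
  have i1: "integrable (lebesgue_on \<Omega>) (\<lambda>x. u x \<bullet> u x)"
    using Uspace_L2v[OF u] by (intro L2v_integrable_inner)
  have i2: "integrable (lebesgue_on \<Omega>) (\<lambda>x. wdiv \<Omega> u x * wdiv \<Omega> u x)"
    using L2_wdiv[OF u] by (intro L2_integrable_mult)
  have i3: "integrable (lebesgue_on \<Omega>) (\<lambda>x. (\<Sum>i\<in>Basis. \<Sum>j\<in>Basis. C x i j * C x i j) / 2)"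
    unfolding C_def using u
    by (intro Bochner_Integration.integrable_divide Bochner_Integration.integrable_sum
        L2_integrable_mult L2_wcurl)
  have i4: "integrable (lebesgue_on \<Omega>) (\<lambda>x. wgrad \<Omega> p x \<bullet> wgrad \<Omega> p x)"
    using L2v_wgrad[OF p] by (intro L2v_integrable_inner)
  have density: "norm_sq_density \<Omega> lam u p = (\<lambda>x. u x \<bullet> u x + wdiv \<Omega> u x * wdiv \<Omega> u x
      + (\<Sum>i\<in>Basis. \<Sum>j\<in>Basis. C x i j * C x i j) / 2 + wgrad \<Omega> p x \<bullet> wgrad \<Omega> p x)"
    unfolding norm_sq_density_def norm_sq_pt_def C_def ..
  show "integrable (lebesgue_on \<Omega>) (norm_sq_density \<Omega> lam u p)"
    unfolding density using i1 i2 i3 i4 by simp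
  have "0 \<le> norm_sq_density \<Omega> lam u p x" for x
    unfolding density by (intro add_nonneg_nonneg divide_nonneg_pos sum_nonneg) auto
  then have nonneg: "0 \<le> integral\<^sup>L (lebesgue_on \<Omega>) (norm_sq_density \<Omega> lam u p)"
    by simp
  have "normUP \<Omega> lam u p = sqrt (integral\<^sup>L (lebesgue_on \<Omega>) (norm_sq_density \<Omega> lam u p))"
    unfolding normUP_def density ipv_def ip_def curl_ip_def C_def[symmetric] using i1 i2 i3 i4 by simp
  then show "normUP \<Omega> lam u p = sqrt (integral\<^sup>L (lebesgue_on \<Omega>) (norm_sq_density \<Omega> lam u p))"
    and "(normUP \<Omega> lam u p)\<^sup>2 = integral\<^sup>L (lebesgue_on \<Omega>) (norm_sq_density \<Omega> lam u p)"
    using nonneg by simp_all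
qed

lemma normUP_nonneg:
  assumes "Uspace \<Omega> lam u" "H1 \<Omega> p"
  shows "0 \<le> normUP \<Omega> lam u p"
  using normUP_as_integral(2,3)[OF assms] by (metis real_sqrt_ge_zero zero_le_power2)

lemma B_CGLS_lincomb_left:
  assumes lam: "bounded_coeff \<Omega> lam" and kap: "bounded_coeff \<Omega> kap"
    and u: "Uspace \<Omega> lam u1" "Uspace \<Omega> lam u2" and p: "H1 \<Omega> p1" "H1 \<Omega> p2"
    and v: "Uspace \<Omega> lam v" and q: "H1 \<Omega> q"
  shows "B_CGLS \<Omega> lam kap (\<lambda>x. a *\<^sub>R u1 x + b *\<^sub>R u2 x) (\<lambda>x. a * p1 x + b * p2 x) v q =
    a * B_CGLS \<Omega> lam kap u1 p1 v q + b * B_CGLS \<Omega> lam kap u2 p2 v q"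
proof -
  let ?u = "\<lambda>x. a *\<^sub>R u1 x + b *\<^sub>R u2 x" and ?p = "\<lambda>x. a * p1 x + b * p2 x"
  have U: "Uspace \<Omega> lam ?u" and P: "H1 \<Omega> ?p"
    using Uspace_lincomb[OF lam u] H1_lincomb[OF p] .
  note int = B_CGLS_as_integral(1)[OF lam kap _ _ v q]
  have "AE x in lebesgue_on \<Omega>. cgls_density \<Omega> lam kap ?u ?p v q x =
      a * cgls_density \<Omega> lam kap u1 p1 v q x + b * cgls_density \<Omega> lam kap u2 p2 v q x"
    using AE_wdiv_lincomb[OF u, of a b] AE_wcurl_lincomb[OF lam u, of a b] AE_wgrad_lincomb[OF p, of a b]
  proof eventually_elim
    case (elim x)
    then show ?case
      unfolding cgls_density_def by (simp add: cgls_pt_lincomb_left[OF elim(2)])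
  qed
  then have "integral\<^sup>L (lebesgue_on \<Omega>) (cgls_density \<Omega> lam kap ?u ?p v q) =
      integral\<^sup>L (lebesgue_on \<Omega>)
        (\<lambda>x. a * cgls_density \<Omega> lam kap u1 p1 v q x + b * cgls_density \<Omega> lam kap u2 p2 v q x)"
    using int[OF U P] int[OF u(1) p(1)] int[OF u(2) p(2)]
    by (intro integral_cong_AE) simp_all
  then show ?thesis
    using int[OF u(1) p(1)] int[OF u(2) p(2)]
    by (simp add: B_CGLS_as_integral(2)[OF lam kap _ _ v q] U P u p)
qed

lemma B_CGLS_add_right:
  assumes "bounded_coeff \<Omega> lam" "bounded_coeff \<Omega> kap" "Uspace \<Omega> lam u" "H1 \<Omega> p"
    "Uspace \<Omega> lam v1" "Uspace \<Omega> lam v2" "H1 \<Omega> q1" "H1 \<Omega> q2"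
  shows "B_CGLS \<Omega> lam kap u p (\<lambda>x. v1 x + v2 x) (\<lambda>x. q1 x + q2 x) =
    B_CGLS \<Omega> lam kap u p v1 q1 + B_CGLS \<Omega> lam kap u p v2 q2"
  using B_CGLS_lincomb_left[OF assms(1,2,5-8,3,4), of 1 1] by (simp add: B_CGLS_sym[of _ _ _ u p])

lemma B_CGLS_diff_left:
  assumes "bounded_coeff \<Omega> lam" "bounded_coeff \<Omega> kap" "Uspace \<Omega> lam u1" "Uspace \<Omega> lam u2"
    "H1 \<Omega> p1" "H1 \<Omega> p2" "Uspace \<Omega> lam v" "H1 \<Omega> q"
  shows "B_CGLS \<Omega> lam kap (\<lambda>x. u1 x - u2 x) (\<lambda>x. p1 x - p2 x) v q =
    B_CGLS \<Omega> lam kap u1 p1 v q - B_CGLS \<Omega> lam kap u2 p2 v q"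
  using B_CGLS_lincomb_left[OF assms, of 1 "-1"] by simp

lemma AE_wgrad_uminus:
  assumes "H1 \<Omega> p"
  shows "AE x in lebesgue_on \<Omega>. wgrad \<Omega> (\<lambda>x. - p x) x = - wgrad \<Omega> p x"
  using AE_wgrad_lincomb[OF assms assms, of "-1" 0] by simp

lemma normUP_uminus:
  assumes u: "Uspace \<Omega> lam u" and p: "H1 \<Omega> p"
  shows "normUP \<Omega> lam u (\<lambda>x. - p x) = normUP \<Omega> lam u p"
proof -
  have p': "H1 \<Omega> (\<lambda>x. - p x)"
    using H1_lincomb[OF p p, of "-1" 0] by simp
  have "integral\<^sup>L (lebesgue_on \<Omega>) (norm_sq_density \<Omega> lam u (\<lambda>x. - p x)) =
      integral\<^sup>L (lebesgue_on \<Omega>) (norm_sq_density \<Omega> lam u p)"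
    using normUP_as_integral(1)[OF u p] normUP_as_integral(1)[OF u p'] AE_wgrad_uminus[OF p]
    by (intro integral_cong_AE) (auto elim!: eventually_mono simp: norm_sq_density_def norm_sq_pt_def)
  then show ?thesis
    by (simp add: normUP_as_integral(3)[OF u p] normUP_as_integral(3)[OF u p'])
qed

lemma B_CGLS_coercive:
  assumes lam: "bounded_coeff \<Omega> lam" and kap: "bounded_coeff \<Omega> kap"
    and lam_kap: "\<forall>x\<in>\<Omega>. lam x * kap x = 1"
    and lower: "\<forall>x\<in>\<Omega>. lmin \<le> lam x" "\<forall>x\<in>\<Omega>. kmin \<le> kap x"
    and u: "Uspace \<Omega> lam u" and p: "H1 \<Omega> p"
  shows "1/2 * min lmin kmin * (normUP \<Omega> lam u p)\<^sup>2 \<le> B_CGLS \<Omega> lam kap u p u (\<lambda>x. - p x)"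
proof -
  have p': "H1 \<Omega> (\<lambda>x. - p x)"
    using H1_lincomb[OF p p, of "-1" 0] by simp
  have "integral\<^sup>L (lebesgue_on \<Omega>) (\<lambda>x. 1/2 * min lmin kmin * norm_sq_density \<Omega> lam u p x) \<le>
      integral\<^sup>L (lebesgue_on \<Omega>) (cgls_density \<Omega> lam kap u p u (\<lambda>x. - p x))"
  proof (rule integral_mono_AE)
    show "integrable (lebesgue_on \<Omega>) (\<lambda>x. 1/2 * min lmin kmin * norm_sq_density \<Omega> lam u p x)"
      using normUP_as_integral(1)[OF u p] by simp
    show "integrable (lebesgue_on \<Omega>) (cgls_density \<Omega> lam kap u p u (\<lambda>x. - p x))"
      by (rule B_CGLS_as_integral(1)[OF lam kap u p u p'])
    show "AE x in lebesgue_on \<Omega>.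
        1/2 * min lmin kmin * norm_sq_density \<Omega> lam u p x \<le> cgls_density \<Omega> lam kap u p u (\<lambda>x. - p x) x"
      using AE_wgrad_uminus[OF p] AE_space
    proof eventually_elim
      case (elim x)
      then show ?case
        using cgls_pt_coercive[of "lam x" "kap x" lmin kmin] lam_kap lower
        unfolding cgls_density_def norm_sq_density_def by simp
    qed
  qed
  then show ?thesis
    using normUP_as_integral(2)[OF u p] B_CGLS_as_integral(2)[OF lam kap u p u p'] by simp
qed

end

section \<open>Quasi-optimality\<close>

lemma le_divide_mult_if_square_le:
  fixes \<alpha> M n y :: real
  assumes "0 < \<alpha>" "0 \<le> M" "0 \<le> n" "0 \<le> y" "\<alpha> * n\<^sup>2 \<le> M * n * y"
  shows "n \<le> M / \<alpha> * y"
proof (cases "n = 0")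
  case False
  then have "\<alpha> * n \<le> M * y"
    using assms(3,5) by (simp add: power2_eq_square mult_ac)
  then show ?thesis
    using assms(1) by (simp add: field_simps)
qed (use assms in simp)

context bounded_open_set
begin

lemma cgls_quasi_optimality:
  assumes lam: "bounded_coeff \<Omega> lam" and kap: "bounded_coeff \<Omega> kap"
    and lam_kap: "\<forall>x\<in>\<Omega>. lam x * kap x = 1"
    and lower: "\<forall>x\<in>\<Omega>. lmin \<le> lam x" "\<forall>x\<in>\<Omega>. kmin \<le> kap x"
    and pos: "0 < lmin" "0 < kmin" "0 \<le> M"
    and cont: "\<forall>u' p' v' q'. Uspace \<Omega> lam u' \<and> Pspace \<Omega> p' \<and> Uspace \<Omega> lam v' \<and> Pspace \<Omega> q' \<longrightarrow>
        \<bar>B_CGLS \<Omega> lam kap u' p' v' q'\<bar> \<le> M * normUP \<Omega> lam u' p' * normUP \<Omega> lam v' q'"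
    and u: "Uspace \<Omega> lam u" "Uspace \<Omega> lam uh" "Uspace \<Omega> lam vh"
    and p: "Pspace \<Omega> p" "Pspace \<Omega> ph" "Pspace \<Omega> qh"
    and orth: "B_CGLS \<Omega> lam kap (\<lambda>x. u x - uh x) (\<lambda>x. p x - ph x) (\<lambda>x. vh x - uh x) (\<lambda>x. ph x - qh x) = 0"
  shows "normUP \<Omega> lam (\<lambda>x. u x - uh x) (\<lambda>x. p x - ph x)
    \<le> M / (1/2 * min lmin kmin) * normUP \<Omega> lam (\<lambda>x. u x - vh x) (\<lambda>x. p x - qh x)"
proof -
  let ?B = "B_CGLS \<Omega> lam kap (\<lambda>x. u x - uh x) (\<lambda>x. p x - ph x)"
  let ?N = "normUP \<Omega> lam (\<lambda>x. u x - uh x) (\<lambda>x. p x - ph x)"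
  have U: "Uspace \<Omega> lam (\<lambda>x. u x - uh x)" "Uspace \<Omega> lam (\<lambda>x. u x - vh x)"
    "Uspace \<Omega> lam (\<lambda>x. vh x - uh x)"
    using u by (simp_all add: Uspace_diff[OF lam])
  have P: "Pspace \<Omega> (\<lambda>x. p x - ph x)" "Pspace \<Omega> (\<lambda>x. qh x - p x)" "Pspace \<Omega> (\<lambda>x. ph x - qh x)"
    "Pspace \<Omega> (\<lambda>x. p x - qh x)"
    using p by (simp_all add: Pspace_diff)
  have "1/2 * min lmin kmin * ?N\<^sup>2 \<le> ?B (\<lambda>x. u x - uh x) (\<lambda>x. - (p x - ph x))"
    using B_CGLS_coercive[OF lam kap lam_kap lower U(1) Pspace_H1[OF P(1)]] .
  also have "\<dots> = ?B (\<lambda>x. u x - vh x) (\<lambda>x. qh x - p x) + ?B (\<lambda>x. vh x - uh x) (\<lambda>x. ph x - qh x)"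
    using B_CGLS_add_right[OF lam kap U(1) _ U(2,3), of "\<lambda>x. p x - ph x" "\<lambda>x. qh x - p x" "\<lambda>x. ph x - qh x"]
      P by (simp add: Pspace_H1)
  also have "\<dots> \<le> M * ?N * normUP \<Omega> lam (\<lambda>x. u x - vh x) (\<lambda>x. qh x - p x)"
    using cont U P orth by fastforce
  also have "normUP \<Omega> lam (\<lambda>x. u x - vh x) (\<lambda>x. qh x - p x) = normUP \<Omega> lam (\<lambda>x. u x - vh x) (\<lambda>x. p x - qh x)"
    using normUP_uminus[OF U(2) Pspace_H1[OF P(4)]] by simp
  finally show ?thesis
    using pos normUP_nonneg[OF U(1) Pspace_H1[OF P(1)]] normUP_nonneg[OF U(2) Pspace_H1[OF P(4)]]
    by (intro le_divide_mult_if_square_le) auto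
qed

lemma cgls_galerkin_orthogonality:
  assumes lam: "bounded_coeff \<Omega> lam" and kap: "bounded_coeff \<Omega> kap"
    and sol: "Uspace \<Omega> lam u" "Pspace \<Omega> p"
      "\<forall>v q. Uspace \<Omega> lam v \<and> Pspace \<Omega> q \<longrightarrow> B_CGLS \<Omega> lam kap u p v q = F_CGLS \<Omega> lam f v q"
    and solh: "Uh \<Omega> lam T l uh" "Ph \<Omega> T k ph"
      "\<forall>vh qh. Uh \<Omega> lam T l vh \<and> Ph \<Omega> T k qh \<longrightarrow> B_CGLS \<Omega> lam kap uh ph vh qh = F_CGLS \<Omega> lam f vh qh"
    and vh: "Uh \<Omega> lam T l vh" and qh: "Ph \<Omega> T k qh"
  shows "B_CGLS \<Omega> lam kap (\<lambda>x. u x - uh x) (\<lambda>x. p x - ph x) (\<lambda>x. vh x - uh x) (\<lambda>x. ph x - qh x) = 0"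
proof -
  have Z: "Uh \<Omega> lam T l (\<lambda>x. vh x - uh x)" "Ph \<Omega> T k (\<lambda>x. ph x - qh x)"
    using Uh_diff[OF lam vh solh(1)] Ph_diff[OF solh(2) qh] .
  then have "Uspace \<Omega> lam (\<lambda>x. vh x - uh x)" "H1 \<Omega> (\<lambda>x. ph x - qh x)"
    by (simp_all add: Uh_def Ph_def Pspace_H1)
  moreover have "Uspace \<Omega> lam uh" "H1 \<Omega> ph" "H1 \<Omega> p"
    using solh(1,2) sol(2) by (simp_all add: Uh_def Ph_def Pspace_H1)
  ultimately show ?thesis
    using B_CGLS_diff_left[OF lam kap sol(1)] sol(3) solh(3) Z by (simp add: Uh_def Ph_def)
qed

end

lemma cgls_coefficients:
  assumes "open \<Omega>" "C1_on \<Omega> lam" "\<forall>x\<in>\<Omega>. kap x = 1 / lam x" "0 < lmin"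
    "\<forall>x\<in>\<Omega>. lmin \<le> lam x \<and> lam x \<le> lmax" "\<forall>x\<in>\<Omega>. kap x \<le> kmax"
  shows "bounded_coeff \<Omega> lam" "bounded_coeff \<Omega> kap" "\<forall>x\<in>\<Omega>. lam x * kap x = 1"
proof -
  have pos: "\<forall>x\<in>\<Omega>. 0 < lam x"
    using assms(4,5) by force
  have cont: "continuous_on \<Omega> lam"
    using assms(2) by (rule continuous_on_C1_on)
  then have "continuous_on \<Omega> (\<lambda>x. 1 / lam x)"
    using pos by (intro continuous_intros) auto
  then have "continuous_on \<Omega> kap"
    using continuous_on_cong[of \<Omega> \<Omega> kap "\<lambda>x. 1 / lam x"] assms(3) by simp
  moreover have "\<bar>lam x\<bar> \<le> lmax" "\<bar>kap x\<bar> \<le> kmax" if "x \<in> \<Omega>" for x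
    using that assms(3,5,6) pos by (simp_all add: abs_of_pos)
  ultimately show "bounded_coeff \<Omega> lam" "bounded_coeff \<Omega> kap"
    using bounded_coeffI[OF assms(1) cont, of lmax] bounded_coeffI[OF assms(1), of kap kmax] by auto
  show "\<forall>x\<in>\<Omega>. lam x * kap x = 1"
    using assms(3) pos by (simp add: order_less_imp_not_eq2)
qed

theorem lemma3p6:
  fixes \<Omega> :: "'a::euclidean_space set"
    and lam kap f p ph :: "'a \<Rightarrow> real"
    and u uh :: "'a \<Rightarrow> 'a"
    and kmin kmax lmin lmax M h :: real
    and T :: "'a set set"
    and l k :: nat
  assumes dim: "DIM('a) = 2 \<or> DIM('a) = 3"
    and dom: "bounded \<Omega>" "open \<Omega>" "connected \<Omega>" "lipschitz_boundary \<Omega>"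
    and kap_def: "\<forall>x\<in>\<Omega>. kap x = 1 / lam x"
    and lam_C1: "C1_on \<Omega> lam"
    and bnds: "0 < kmin" "kmin \<le> kmax" "0 < lmin" "lmin \<le> lmax"
    and kap_bd: "\<forall>x\<in>\<Omega>. kmin \<le> kap x \<and> kap x \<le> kmax"
    and lam_bd: "\<forall>x\<in>\<Omega>. lmin \<le> lam x \<and> lam x \<le> lmax"
    and f: "L2 \<Omega> f" "integral\<^sup>L (lebesgue_on \<Omega>) f = 0"
    and M: "0 < M"
    and cont: "\<forall>u' p' v' q'. Uspace \<Omega> lam u' \<and> Pspace \<Omega> p' \<and> Uspace \<Omega> lam v' \<and> Pspace \<Omega> q' \<longrightarrow>
        \<bar>B_CGLS \<Omega> lam kap u' p' v' q'\<bar> \<le> M * normUP \<Omega> lam u' p' * normUP \<Omega> lam v' q'"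
    and mesh: "is_partition \<Omega> T h" "1 \<le> l" "1 \<le> k"
    and sol: "Uspace \<Omega> lam u" "Pspace \<Omega> p"
      "\<forall>v q. Uspace \<Omega> lam v \<and> Pspace \<Omega> q \<longrightarrow> B_CGLS \<Omega> lam kap u p v q = F_CGLS \<Omega> lam f v q"
    and solh: "Uh \<Omega> lam T l uh" "Ph \<Omega> T k ph"
      "\<forall>vh qh. Uh \<Omega> lam T l vh \<and> Ph \<Omega> T k qh \<longrightarrow> B_CGLS \<Omega> lam kap uh ph vh qh = F_CGLS \<Omega> lam f vh qh"
  shows "\<forall>vh qh. Uh \<Omega> lam T l vh \<and> Ph \<Omega> T k qh \<longrightarrow>
    normUP \<Omega> lam (\<lambda>x. u x - uh x) (\<lambda>x. p x - ph x)
      \<le> M / (1/2 * min lmin kmin) * normUP \<Omega> lam (\<lambda>x. u x - vh x) (\<lambda>x. p x - qh x)"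
proof (intro allI impI)
  fix vh qh assume "Uh \<Omega> lam T l vh \<and> Ph \<Omega> T k qh"
  then have vh: "Uh \<Omega> lam T l vh" and qh: "Ph \<Omega> T k qh"
    by simp_all
  interpret bounded_open_set \<Omega>
    using dom by unfold_locales
  have "\<forall>x\<in>\<Omega>. kap x \<le> kmax"
    using kap_bd by simp
  then have lam: "bounded_coeff \<Omega> lam" and kap: "bounded_coeff \<Omega> kap"
    and lam_kap: "\<forall>x\<in>\<Omega>. lam x * kap x = 1"
    using cgls_coefficients[OF dom(2) lam_C1 kap_def bnds(3) lam_bd] by simp_all
  have "Uspace \<Omega> lam uh" "Uspace \<Omega> lam vh" "Pspace \<Omega> ph" "Pspace \<Omega> qh"
    using solh(1,2) vh qh by (simp_all add: Uh_def Ph_def)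
  then show "normUP \<Omega> lam (\<lambda>x. u x - uh x) (\<lambda>x. p x - ph x)
      \<le> M / (1/2 * min lmin kmin) * normUP \<Omega> lam (\<lambda>x. u x - vh x) (\<lambda>x. p x - qh x)"
    using cgls_galerkin_orthogonality[OF lam kap sol solh vh qh] lam_bd kap_bd bnds M
    by (intro cgls_quasi_optimality[OF lam kap lam_kap _ _ _ _ _ cont sol(1) _ _ sol(2)]) auto
qed

end
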